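(* Let $(n_k)_{k\ge0}$ be a strictly increasing sequence of positive integers with $n_0=1$ such that for every $\varepsilon>0$ there exists $\lambda\in\mathbb{T}\setminus\{1\}$ with $\sup_{k\ge0}|\lambda^{n_k}-1|\le\varepsilon$. Then for every $\delta>0$ there exists a bounded linear operator $T$ on the Hilbert space $\ell_2(\mathbb{N})$ which has perfectly spanning unimodular eigenvectors and satisfies $\sup_{k\ge0}\|T^{n_k}\|\le 1+\delta$. In particular, $\sigma_p(T)\cap\mathbb{T}$ is uncountable.
   Context: $\mathbb{T}$ is the unit circle in $\mathbb{C}$; $\sigma_p(T)$ is the set of eigenvalues of $T$. A bounded operator $T$ on a complex separable Hilbert space $H$ has perfectly spanning unimodular eigenvectors if there exists a continuous (atomless) Borel probability measure $\sigma$ on $\mathbb{T}$ such that for every Borel set $B\subseteq\mathbb{T}$ with $\sigma(B)=1$, the closed linear span of $\bigcup_{\lambda\in B}\ker(T-\lambda I)$ equals $H$. *)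

theory Defs
  imports "HOL-Probability.Probability"
begin

definition ell2 :: "(nat \<Rightarrow> complex) set" where
  "ell2 = {x. summable (\<lambda>i. (cmod (x i))\<^sup>2)}"

definition ell2_norm :: "(nat \<Rightarrow> complex) \<Rightarrow> real" where
  "ell2_norm x = sqrt (\<Sum>i. (cmod (x i))\<^sup>2)"

definition bounded_op_ell2 :: "((nat \<Rightarrow> complex) \<Rightarrow> (nat \<Rightarrow> complex)) \<Rightarrow> bool" where
  "bounded_op_ell2 T \<longleftrightarrow>
     (\<forall>x\<in>ell2. T x \<in> ell2) \<and>
     (\<forall>x\<in>ell2. \<forall>y\<in>ell2. T (\<lambda>i. x i + y i) = (\<lambda>i. T x i + T y i)) \<and>
     (\<forall>x\<in>ell2. \<forall>c::complex. T (\<lambda>i. c * x i) = (\<lambda>i. c * T x i)) \<and>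
     (\<exists>C. \<forall>x\<in>ell2. ell2_norm (T x) \<le> C * ell2_norm x)"

definition op_norm_ell2 :: "((nat \<Rightarrow> complex) \<Rightarrow> (nat \<Rightarrow> complex)) \<Rightarrow> real" where
  "op_norm_ell2 T = Sup {ell2_norm (T x) | x. x \<in> ell2 \<and> ell2_norm x \<le> 1}"

definition eigenspace_ell2 :: "((nat \<Rightarrow> complex) \<Rightarrow> (nat \<Rightarrow> complex)) \<Rightarrow> complex \<Rightarrow> (nat \<Rightarrow> complex) set" where
  "eigenspace_ell2 T l = {x \<in> ell2. T x = (\<lambda>i. l * x i)}"

definition point_spectrum_ell2 :: "((nat \<Rightarrow> complex) \<Rightarrow> (nat \<Rightarrow> complex)) \<Rightarrow> complex set" where
  "point_spectrum_ell2 T = {l. \<exists>x\<in>eigenspace_ell2 T l. x \<noteq> (\<lambda>i. 0)}"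

definition cspan_ell2 :: "(nat \<Rightarrow> complex) set \<Rightarrow> (nat \<Rightarrow> complex) set" where
  "cspan_ell2 S = {(\<lambda>i. \<Sum>v\<in>F. c v * v i) | F c. finite F \<and> F \<subseteq> S}"

definition closed_span_ell2 :: "(nat \<Rightarrow> complex) set \<Rightarrow> (nat \<Rightarrow> complex) set" where
  "closed_span_ell2 S =
     {x \<in> ell2. \<forall>e>0. \<exists>y\<in>cspan_ell2 S. ell2_norm (\<lambda>i. x i - y i) < e}"

definition perfectly_spanning_unimodular ::
  "((nat \<Rightarrow> complex) \<Rightarrow> (nat \<Rightarrow> complex)) \<Rightarrow> bool" where
  "perfectly_spanning_unimodular T \<longleftrightarrow>
     (\<exists>\<sigma> :: complex measure.
        sets \<sigma> = sets borel \<and> prob_space \<sigma> \<and>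
        emeasure \<sigma> (sphere 0 1) = 1 \<and>
        (\<forall>z. emeasure \<sigma> {z} = 0) \<and>
        (\<forall>B. B \<in> sets borel \<longrightarrow> B \<subseteq> sphere 0 1 \<longrightarrow> emeasure \<sigma> B = 1 \<longrightarrow>
             closed_span_ell2 (\<Union>l\<in>B. eigenspace_ell2 T l) = ell2))"

end

theory Submission
  imports Defs "HOL-Library.Nat_Bijection"
begin


(* Finite subsets of N are coded by natural numbers (binary expansion), so that
   l2(N) becomes the infinite tensor product of copies of C^2, with basis vectors e_I indexed by
   finite sets I.  For sequences g, h the operator T(g,h), the tensor product of the matrices
   [[1, g_j], [0, h_j]], has entries  <e_I, T e_M> = [I <= M] * prod_{M - I} g_j * prod_I h_j.
   If all |h_j| = 1 and sum |g_j| < oo, Schur's test gives ||T(g,h)|| <= exp (sum |g_j|), and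
   such operators compose factor by factor.
   For unimodular lambda_j ~= 1 the model operator uses g_j = 2^j (lambda_j - 1), h_j = lambda_j;
   then T^m = T(2^j (lambda_j^m - 1), lambda_j^m), so ||T^m|| is close to 1 whenever all
   lambda_j^m are close to 1.  Each factor has the eigenvectors e_0 and e_0 + 2^-j e_1, so each
   a : N -> bool yields an eigenvector E_a with eigenvalue mu(a) = prod {lambda_j | a j}.
   If |lambda_j - 1| decreases fast enough, mu is injective, hence the image of fair coin
   tossing under mu is an atomless measure on the circle.  A set B of full measure pulls back
   to a set meeting every cylinder, which lets us approximate the finitely supported E_a; these
   span all basis vectors.  The hypothesis on (n_k) provides a suitable sequence (lambda_j), and
   uncountability of the unimodular point spectrum follows from perfect spanning alone. *)

lemma summable_bounded_nonneg:
  fixes f :: "nat \<Rightarrow> real"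
  assumes "\<And>n. 0 \<le> f n" "\<And>n. (\<Sum>i<n. f i) \<le> B"
  shows "summable f \<and> suminf f \<le> B"
  using summableI_nonneg_bounded[OF assms] suminf_le_const assms by blast

lemma ell2_norm_nonneg: "x \<in> ell2 \<Longrightarrow> 0 \<le> ell2_norm x"
  by (auto simp: ell2_norm_def ell2_def intro!: suminf_nonneg)

lemma ell2_norm_sq: "x \<in> ell2 \<Longrightarrow> (ell2_norm x)^2 = (\<Sum>i. (cmod (x i))^2)"
  by (auto simp: ell2_norm_def ell2_def intro!: suminf_nonneg)

lemma ell2_partial_le: "finite I \<Longrightarrow> x \<in> ell2 \<Longrightarrow> (\<Sum>i\<in>I. (cmod (x i))^2) \<le> (ell2_norm x)^2"
  by (auto simp: ell2_norm_sq ell2_def intro!: sum_le_suminf)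

lemma ell2_normI:
  assumes "\<And>n. (\<Sum>i<n. (cmod (x i))^2) \<le> B^2" "0 \<le> B"
  shows "x \<in> ell2 \<and> ell2_norm x \<le> B"
proof -
  have *: "summable (\<lambda>i. (cmod (x i))^2) \<and> (\<Sum>i. (cmod (x i))^2) \<le> B^2"
    by (rule summable_bounded_nonneg) (use assms in auto)
  then have "ell2_norm x \<le> sqrt (B^2)" unfolding ell2_norm_def by (intro real_sqrt_le_mono) auto
  with * assms show ?thesis by (simp add: ell2_def)
qed

lemma ell2_cauchy_schwarz:
  assumes "x \<in> ell2" "y \<in> ell2"
  shows "summable (\<lambda>i. cmod (x i) * cmod (y i)) \<and>
         (\<Sum>i. cmod (x i) * cmod (y i)) \<le> ell2_norm x * ell2_norm y"
proof (rule summable_bounded_nonneg)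
  have L2_le: "L2_set (\<lambda>i. cmod (z i)) {..<n} \<le> ell2_norm z" if "z \<in> ell2" for z n
    using ell2_partial_le[OF _ that, of "{..<n}"] ell2_norm_nonneg[OF that]
    unfolding L2_set_def by (simp add: real_le_lsqrt)
  fix n
  have "(\<Sum>i<n. cmod (x i) * cmod (y i)) = (\<Sum>i<n. \<bar>cmod (x i)\<bar> * \<bar>cmod (y i)\<bar>)" by simp
  also have "\<dots> \<le> L2_set (\<lambda>i. cmod (x i)) {..<n} * L2_set (\<lambda>i. cmod (y i)) {..<n}"
    by (rule L2_set_mult_ineq)
  also have "\<dots> \<le> ell2_norm x * ell2_norm y"
    by (intro mult_mono L2_le assms ell2_norm_nonneg L2_set_nonneg)
  finally show "(\<Sum>i<n. cmod (x i) * cmod (y i)) \<le> ell2_norm x * ell2_norm y" .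
qed auto

lemma ell2_add:
  assumes "x \<in> ell2" "y \<in> ell2"
  shows "(\<lambda>i. x i + y i) \<in> ell2 \<and> ell2_norm (\<lambda>i. x i + y i) \<le> ell2_norm x + ell2_norm y"
proof (rule ell2_normI)
  fix n
  have CS: "summable (\<lambda>i. cmod (x i) * cmod (y i))"
    "(\<Sum>i. cmod (x i) * cmod (y i)) \<le> ell2_norm x * ell2_norm y"
    using ell2_cauchy_schwarz[OF assms] by auto
  have "(\<Sum>i<n. (cmod (x i + y i))^2) \<le> (\<Sum>i<n. (cmod (x i) + cmod (y i))^2)"
    by (intro sum_mono power_mono norm_triangle_ineq) auto
  also have "\<dots> = (\<Sum>i<n. (cmod (x i))^2) + 2 * (\<Sum>i<n. cmod (x i) * cmod (y i))
                  + (\<Sum>i<n. (cmod (y i))^2)"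
    by (simp add: power2_sum sum.distrib sum_distrib_left mult.assoc)
  also have "\<dots> \<le> (ell2_norm x)^2 + 2 * (ell2_norm x * ell2_norm y) + (ell2_norm y)^2"
    using ell2_partial_le[OF _ assms(1), of "{..<n}"] ell2_partial_le[OF _ assms(2), of "{..<n}"]
      sum_le_suminf[OF CS(1), of "{..<n}"] CS(2) by auto
  also have "\<dots> = (ell2_norm x + ell2_norm y)^2" by (simp add: power2_sum)
  finally show "(\<Sum>i<n. (cmod (x i + y i))^2) \<le> (ell2_norm x + ell2_norm y)^2" .
qed (use assms in \<open>auto simp: ell2_norm_nonneg\<close>)

lemma ell2_scale:
  assumes "x \<in> ell2"
  shows "(\<lambda>i. c * x i) \<in> ell2 \<and> ell2_norm (\<lambda>i. c * x i) = cmod c * ell2_norm x"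
proof -
  have s: "summable (\<lambda>i. (cmod (x i))^2)" using assms by (simp add: ell2_def)
  have "(\<lambda>i. (cmod (c * x i))^2) = (\<lambda>i. (cmod c)^2 * (cmod (x i))^2)"
    by (simp add: norm_mult power_mult_distrib)
  moreover have "summable (\<lambda>i. (cmod c)^2 * (cmod (x i))^2)" using s by (rule summable_mult)
  moreover have "sqrt (\<Sum>i. (cmod c)^2 * (cmod (x i))^2) = cmod c * ell2_norm x"
    using suminf_mult[OF s, of "(cmod c)^2"] by (simp add: ell2_norm_def real_sqrt_mult)
  ultimately show ?thesis by (simp add: ell2_def ell2_norm_def)
qed

lemma ell2_diff: "x \<in> ell2 \<Longrightarrow> y \<in> ell2 \<Longrightarrow> (\<lambda>i. x i - y i) \<in> ell2"
  using ell2_add[of x "\<lambda>i. - 1 * y i"] ell2_scale[of y "- 1"] by simp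

lemma ell2_dist_triangle:
  assumes "x \<in> ell2" "y \<in> ell2" "z \<in> ell2"
  shows "ell2_norm (\<lambda>i. x i - z i) \<le> ell2_norm (\<lambda>i. x i - y i) + ell2_norm (\<lambda>i. y i - z i)"
  using ell2_add[OF ell2_diff[OF assms(1,2)] ell2_diff[OF assms(2,3)]] by simp

lemma ell2_dist_commute: "ell2_norm (\<lambda>i. x i - y i) = ell2_norm (\<lambda>i. y i - x i)"
  by (simp add: ell2_norm_def norm_minus_commute)

lemma ell2_zero: "(\<lambda>i. 0) \<in> ell2"
  by (simp add: ell2_def)

lemma ell2_norm_zero: "ell2_norm (\<lambda>i. 0) = 0"
  by (simp add: ell2_norm_def)

lemma ell2_coord_le_norm: "x \<in> ell2 \<Longrightarrow> cmod (x i) \<le> ell2_norm x"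
  using ell2_partial_le[of "{i}" x] ell2_norm_nonneg[of x] by (simp add: abs_le_square_iff)

lemma ell2_norm_eq_0: "x \<in> ell2 \<Longrightarrow> ell2_norm x = 0 \<Longrightarrow> x = (\<lambda>i. 0)"
  using ell2_coord_le_norm by (fastforce intro: ext)

lemma ell2_finite_support:
  assumes "\<And>i. N \<le> i \<Longrightarrow> x i = 0" shows "x \<in> ell2"
proof -
  have "summable (\<lambda>i. (cmod (x i))^2)"
    by (rule summable_finite[of "{..<N}"]) (use assms in auto)
  then show ?thesis by (simp add: ell2_def)
qed

lemma op_norm_ell2_le:
  assumes "\<And>x. x \<in> ell2 \<Longrightarrow> ell2_norm (S x) \<le> C * ell2_norm x" "0 \<le> C"
  shows "op_norm_ell2 S \<le> C"
  unfolding op_norm_ell2_def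
proof (rule cSup_least)
  show "{ell2_norm (S x) |x. x \<in> ell2 \<and> ell2_norm x \<le> 1} \<noteq> {}"
    using ell2_zero ell2_norm_zero by fastforce
next
  fix r assume "r \<in> {ell2_norm (S x) |x. x \<in> ell2 \<and> ell2_norm x \<le> 1}"
  then obtain x where x: "x \<in> ell2" "ell2_norm x \<le> 1" "r = ell2_norm (S x)" by blast
  have "r \<le> C * ell2_norm x" using assms(1)[OF x(1)] x(3) by simp
  also have "\<dots> \<le> C" using x(2) assms(2) mult_left_le by blast
  finally show "r \<le> C" .
qed

definition truncate :: "nat \<Rightarrow> (nat \<Rightarrow> complex) \<Rightarrow> nat \<Rightarrow> complex" where
  "truncate J x = (\<lambda>m. if m < J then x m else 0)"

lemma truncate_ell2: "truncate J x \<in> ell2"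
  by (rule ell2_finite_support[of J]) (simp add: truncate_def)

lemma tail_sum_tendsto_0:
  fixes a :: "nat \<Rightarrow> real" assumes "summable a"
  shows "(\<lambda>J. \<Sum>m. (if m < J then 0 else a m)) \<longlonglongrightarrow> 0"
proof -
  have eq: "(\<Sum>m. (if m < J then 0 else a m)) = suminf a - (\<Sum>m<J. a m)" for J
  proof -
    have s1: "summable (\<lambda>m. if m < J then a m else 0)"
      by (rule summable_finite[of "{..<J}"]) auto
    have f: "(\<Sum>m. if m < J then a m else 0) = (\<Sum>m<J. a m)"
      by (subst suminf_finite[of "{..<J}"]) auto
    have "(\<lambda>m. if m < J then 0 else a m) = (\<lambda>m. a m - (if m < J then a m else 0))" by auto
    then show ?thesis using suminf_diff[OF assms s1] f by simp
  qed
  have "(\<lambda>J. suminf a - (\<Sum>m<J. a m)) \<longlonglongrightarrow> suminf a - suminf a"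
    by (intro tendsto_diff tendsto_const summable_LIMSEQ assms)
  then show ?thesis by (simp add: eq)
qed

lemma truncate_tendsto:
  assumes "x \<in> ell2" shows "(\<lambda>J. ell2_norm (\<lambda>m. x m - truncate J x m)) \<longlonglongrightarrow> 0"
proof -
  have "(\<lambda>m. (cmod (x m - truncate J x m))^2) = (\<lambda>m. (if m < J then 0 else (cmod (x m))^2))" for J
    by (auto simp: truncate_def)
  then have eq: "ell2_norm (\<lambda>m. x m - truncate J x m) = sqrt (\<Sum>m. (if m < J then 0 else (cmod (x m))^2))" for J
    by (simp add: ell2_norm_def)
  have "(\<lambda>J. sqrt (\<Sum>m. (if m < J then 0 else (cmod (x m))^2))) \<longlonglongrightarrow> sqrt 0"
    by (intro tendsto_real_sqrt tail_sum_tendsto_0) (use assms in \<open>simp add: ell2_def\<close>)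
  then show ?thesis by (simp add: eq)
qed

lemma eventually_less_of_tendsto_0:
  fixes f :: "nat \<Rightarrow> real"
  assumes "f \<longlonglongrightarrow> 0" "e > 0" shows "\<exists>N. \<forall>n\<ge>N. f n < e"
  using order_tendstoD(2)[OF assms] by (simp add: eventually_sequentially)

section \<open>Finite sets of naturals coded as naturals\<close>

text \<open>The basis vector with index \<open>m\<close> stands for the finite set \<open>bits m\<close> of binary digits of \<open>m\<close>.\<close>

abbreviation bits :: "nat \<Rightarrow> nat set" where "bits \<equiv> set_decode"

lemma codes_of_subsets: "finite A \<Longrightarrow> {m. bits m \<subseteq> A} = set_encode ` Pow A"
proof safe
  fix m assume "finite A" "bits m \<subseteq> A"
  then show "m \<in> set_encode ` Pow A" by (intro image_eqI[of _ _ "bits m"]) auto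
next
  fix S x assume "finite A" "S \<subseteq> A" "x \<in> bits (set_encode S)"
  then show "x \<in> A" using finite_subset[of S A] by auto
qed

lemma finite_codes: "finite A \<Longrightarrow> finite {m. bits m \<subseteq> A}"
  by (simp add: codes_of_subsets)

lemma sum_over_codes:
  assumes "finite A"
  shows "(\<Sum>m | bits m \<subseteq> A. F (bits m)) = (\<Sum>S\<in>Pow A. F S)"
proof -
  have inj: "inj_on set_encode (Pow A)"
    using inj_on_set_encode by (rule inj_on_subset) (use assms finite_subset in auto)
  have "(\<Sum>m | bits m \<subseteq> A. F (bits m)) = (\<Sum>m\<in>set_encode ` Pow A. F (bits m))"
    by (simp add: codes_of_subsets assms)
  also have "\<dots> = (\<Sum>S\<in>Pow A. F (bits (set_encode S)))"
    by (rule sum.reindex[OF inj, unfolded comp_def])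
  also have "\<dots> = (\<Sum>S\<in>Pow A. F S)"
    by (intro sum.cong refl) (auto dest: finite_subset[OF _ assms])
  finally show ?thesis .
qed

lemma sum_Pow_prod:
  fixes f :: "nat \<Rightarrow> 'a::comm_semiring_1"
  assumes "finite A" shows "(\<Sum>S\<in>Pow A. \<Prod>j\<in>S. f j) = (\<Prod>j\<in>A. 1 + f j)"
  using prod_add[OF assms, of f "\<lambda>_. 1"] by (simp add: add.commute)

lemma bit_less: "j \<in> bits m \<Longrightarrow> j < m"
proof -
  assume j: "j \<in> bits m"
  have "(2::nat)^j \<le> sum ((^) 2) (bits m)"
    using j by (intro member_le_sum) auto
  also have "\<dots> = m" using set_decode_inverse[of m] by (simp add: set_encode_def)
  finally show ?thesis using less_exp[of j] by linarith
qed

lemma prod_one_plus_le_exp_suminf: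
  assumes "summable (\<lambda>j. cmod (g j))" "finite A"
  shows "(\<Prod>j\<in>A. 1 + cmod (g j)) \<le> exp (\<Sum>j. cmod (g j))"
proof -
  have "(\<Prod>j\<in>A. 1 + cmod (g j)) \<le> (\<Prod>j\<in>A. exp (cmod (g j)))"
    by (intro prod_mono) (auto simp: add_nonneg_nonneg)
  also have "\<dots> = exp (\<Sum>j\<in>A. cmod (g j))" by (simp add: exp_sum assms(2))
  also have "\<dots> \<le> exp (\<Sum>j. cmod (g j))" using sum_le_suminf[OF assms(1,2)] by simp
  finally show ?thesis .
qed

section \<open>Tensor-product operators\<close>

text \<open>\<open>tensor_op g h\<close> is the infinite tensor product of the upper-triangular matrices
  \<open>[[1, g\<^sub>j], [0, h\<^sub>j]]\<close>, written as a matrix over the basis indexed by codes of finite sets.\<close>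

definition tensor_entry :: "(nat \<Rightarrow> complex) \<Rightarrow> (nat \<Rightarrow> complex) \<Rightarrow> nat \<Rightarrow> nat \<Rightarrow> complex" where
  "tensor_entry g h i m =
     (if bits i \<subseteq> bits m then (\<Prod>j\<in>bits m - bits i. g j) * (\<Prod>j\<in>bits i. h j) else 0)"

definition tensor_op ::
  "(nat \<Rightarrow> complex) \<Rightarrow> (nat \<Rightarrow> complex) \<Rightarrow> (nat \<Rightarrow> complex) \<Rightarrow> nat \<Rightarrow> complex" where
  "tensor_op g h x = (\<lambda>i. \<Sum>m. tensor_entry g h i m * x m)"

definition unimodular :: "(nat \<Rightarrow> complex) \<Rightarrow> bool" where
  "unimodular h \<longleftrightarrow> (\<forall>j. cmod (h j) = 1)"

text \<open>Unimodular diagonal and absolutely summable off-diagonal entries make the product bounded.\<close>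

definition admissible :: "(nat \<Rightarrow> complex) \<Rightarrow> (nat \<Rightarrow> complex) \<Rightarrow> bool" where
  "admissible g h \<longleftrightarrow> unimodular h \<and> summable (\<lambda>j. cmod (g j))"

definition tensor_bound :: "(nat \<Rightarrow> complex) \<Rightarrow> real" where
  "tensor_bound g = exp (\<Sum>j. cmod (g j))"

lemma tensor_bound_ge_1: "admissible g h \<Longrightarrow> 1 \<le> tensor_bound g"
  by (simp add: tensor_bound_def admissible_def suminf_nonneg)

lemma prod_one_plus_le_tensor_bound:
  "admissible g h \<Longrightarrow> finite A \<Longrightarrow> (\<Prod>j\<in>A. 1 + cmod (g j)) \<le> tensor_bound g"
  unfolding tensor_bound_def admissible_def by (blast intro: prod_one_plus_le_exp_suminf)

lemma cmod_tensor_entry: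
  assumes "unimodular h"
  shows "cmod (tensor_entry g h i m) =
           (if bits i \<subseteq> bits m then (\<Prod>j\<in>bits m - bits i. cmod (g j)) else 0)"
proof -
  have "cmod (prod h (bits i)) = 1" using assms by (simp add: unimodular_def prod_norm[symmetric])
  then show ?thesis by (simp add: tensor_entry_def norm_mult prod_norm[symmetric])
qed

lemma tensor_entry_zero: "\<not> bits i \<subseteq> bits m \<Longrightarrow> tensor_entry g h i m = 0"
  by (simp add: tensor_entry_def)

lemma tensor_entry_nonzero_le: "tensor_entry g h i m \<noteq> 0 \<Longrightarrow> i \<le> m"
  by (metis tensor_entry_zero subset_decode_imp_le)

text \<open>Row sums of \<open>|tensor_entry|\<close> are bounded: a row is a sub-sum of the expansion of \<open>\<Prod>\<^sub>j\<^sub>\<in>\<^sub>A (1 + |g\<^sub>j|)\<close>.\<close>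

lemma row_sum_bound:
  assumes "admissible g h" "finite I"
  shows "(\<Sum>m\<in>I. cmod (tensor_entry g h i m)) \<le> tensor_bound g"
proof -
  have h: "unimodular h" using assms(1) by (simp add: admissible_def)
  define A where "A = bits i \<union> (\<Union>m\<in>I. bits m)"
  have fA: "finite A" using assms(2) by (simp add: A_def)
  have "(\<Sum>m\<in>I. cmod (tensor_entry g h i m)) \<le> (\<Sum>m | bits m \<subseteq> A. cmod (tensor_entry g h i m))"
    by (intro sum_mono2 finite_codes fA) (auto simp: A_def)
  also have "\<dots> = (\<Sum>S\<in>Pow A. if bits i \<subseteq> S then (\<Prod>j\<in>S - bits i. cmod (g j)) else 0)"
    using sum_over_codes[OF fA, of "\<lambda>S. if bits i \<subseteq> S then (\<Prod>j\<in>S - bits i. cmod (g j)) else 0"]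
    by (simp add: cmod_tensor_entry[OF h])
  also have "\<dots> = (\<Sum>S\<in>{S\<in>Pow A. bits i \<subseteq> S}. (\<Prod>j\<in>S - bits i. cmod (g j)))"
    by (simp add: sum.If_cases fA Int_def)
  also have "\<dots> = (\<Sum>R\<in>(\<lambda>S. S - bits i) ` {S\<in>Pow A. bits i \<subseteq> S}. (\<Prod>j\<in>R. cmod (g j)))"
    by (rule sum.reindex[symmetric, unfolded comp_def]) (rule inj_onI, blast)
  also have "\<dots> \<le> (\<Sum>R\<in>Pow A. (\<Prod>j\<in>R. cmod (g j)))"
    by (intro sum_mono2 prod_nonneg) (auto simp: fA)
  also have "\<dots> = (\<Prod>j\<in>A. 1 + cmod (g j))" by (rule sum_Pow_prod[OF fA])
  also have "\<dots> \<le> tensor_bound g" by (rule prod_one_plus_le_tensor_bound[OF assms(1) fA])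
  finally show ?thesis .
qed

text \<open>Column sums are bounded likewise: column \<open>m\<close> lives on the subsets of \<open>bits m\<close>.\<close>

lemma col_sum_bound:
  assumes "admissible g h" "finite I"
  shows "(\<Sum>i\<in>I. cmod (tensor_entry g h i m)) \<le> tensor_bound g"
proof -
  have h: "unimodular h" using assms(1) by (simp add: admissible_def)
  define A where "A = bits m"
  have fA: "finite A" by (simp add: A_def)
  have "(\<Sum>i\<in>I. cmod (tensor_entry g h i m)) = (\<Sum>i\<in>I \<inter> {i. bits i \<subseteq> A}. cmod (tensor_entry g h i m))"
    by (rule sum.mono_neutral_right) (auto simp: assms(2) tensor_entry_zero A_def)
  also have "\<dots> \<le> (\<Sum>i | bits i \<subseteq> A. cmod (tensor_entry g h i m))"
    by (intro sum_mono2 finite_codes fA) auto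
  also have "\<dots> = (\<Sum>S\<in>Pow A. \<Prod>j\<in>A - S. cmod (g j))"
    using sum_over_codes[OF fA, of "\<lambda>S. \<Prod>j\<in>A - S. cmod (g j)"]
    by (simp add: cmod_tensor_entry[OF h] A_def)
  also have "\<dots> = (\<Sum>Q\<in>Pow A. \<Prod>j\<in>Q. cmod (g j))"
    by (rule sum.reindex_bij_witness[of _ "\<lambda>Q. A - Q" "\<lambda>Q. A - Q"]) auto
  also have "\<dots> = (\<Prod>j\<in>A. 1 + cmod (g j))" by (rule sum_Pow_prod[OF fA])
  also have "\<dots> \<le> tensor_bound g" by (rule prod_one_plus_le_tensor_bound[OF assms(1) fA])
  finally show ?thesis .
qed

lemma row_summable:
  assumes "admissible g h"
  shows "summable (\<lambda>m. cmod (tensor_entry g h i m)) \<and> (\<Sum>m. cmod (tensor_entry g h i m)) \<le> tensor_bound g"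
  by (rule summable_bounded_nonneg) (use row_sum_bound[OF assms] in auto)

lemma cmod_tensor_entry_le: "admissible g h \<Longrightarrow> cmod (tensor_entry g h i m) \<le> tensor_bound g"
  using row_sum_bound[of g h "{m}" i] by simp

text \<open>The Cauchy--Schwarz step of Schur's test, for a single output coordinate.\<close>

lemma coordinate_estimate:
  assumes "admissible g h" "y \<in> ell2"
  shows "summable (\<lambda>m. cmod (tensor_entry g h i m) * cmod (y m))"
    and "summable (\<lambda>m. cmod (tensor_entry g h i m) * (cmod (y m))^2)"
    and "(\<Sum>m. cmod (tensor_entry g h i m) * cmod (y m))^2
           \<le> tensor_bound g * (\<Sum>m. cmod (tensor_entry g h i m) * (cmod (y m))^2)"
proof -
  let ?a = "\<lambda>m. cmod (tensor_entry g h i m)"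
  have rs: "summable ?a" "(\<Sum>m. ?a m) \<le> tensor_bound g"
    using row_summable[OF assms(1)] by auto
  have ys: "summable (\<lambda>m. (cmod (y m))^2)" using assms(2) by (simp add: ell2_def)
  show s2: "summable (\<lambda>m. ?a m * (cmod (y m))^2)"
    by (rule summable_comparison_test'[OF summable_mult[OF ys, of "tensor_bound g"]])
       (auto intro!: mult_right_mono cmod_tensor_entry_le[OF assms(1)])
  define u where "u m = complex_of_real (sqrt (?a m))" for m
  define v where "v m = complex_of_real (sqrt (?a m) * cmod (y m))" for m
  have u: "u \<in> ell2" using rs(1) by (simp add: ell2_def u_def)
  have vsq: "(cmod (v m))^2 = ?a m * (cmod (y m))^2" for m
    by (simp add: v_def norm_mult power_mult_distrib abs_mult)
  have v: "v \<in> ell2" using s2 by (simp add: ell2_def vsq)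
  have uv: "cmod (u m) * cmod (v m) = ?a m * cmod (y m)" for m
    by (simp add: u_def v_def abs_mult norm_mult mult.assoc[symmetric])
  from ell2_cauchy_schwarz[OF u v] show s1: "summable (\<lambda>m. ?a m * cmod (y m))"
    by (simp add: uv)
  have le: "(\<Sum>m. ?a m * cmod (y m)) \<le> ell2_norm u * ell2_norm v"
    using ell2_cauchy_schwarz[OF u v] by (simp add: uv)
  have "(\<Sum>m. ?a m * cmod (y m))^2 \<le> (ell2_norm u * ell2_norm v)^2"
    by (rule power_mono[OF le]) (intro suminf_nonneg s1, simp)
  also have "\<dots> = (\<Sum>m. ?a m) * (\<Sum>m. ?a m * (cmod (y m))^2)"
    by (simp add: power_mult_distrib ell2_norm_sq[OF u] ell2_norm_sq[OF v] u_def vsq)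
  also have "\<dots> \<le> tensor_bound g * (\<Sum>m. ?a m * (cmod (y m))^2)"
    by (intro mult_right_mono rs(2) suminf_nonneg s2) simp
  finally show "(\<Sum>m. ?a m * cmod (y m))^2 \<le> tensor_bound g * (\<Sum>m. ?a m * (cmod (y m))^2)" .
qed

lemma tensor_op_summable:
  "admissible g h \<Longrightarrow> y \<in> ell2 \<Longrightarrow> summable (\<lambda>m. tensor_entry g h i m * y m)"
  using summable_norm_cancel[of "\<lambda>m. tensor_entry g h i m * y m"] coordinate_estimate(1)[of g h y i]
  by (simp add: norm_mult)

lemma tensor_op_coord_le:
  "admissible g h \<Longrightarrow> y \<in> ell2 \<Longrightarrow>
     cmod (tensor_op g h y i) \<le> (\<Sum>m. cmod (tensor_entry g h i m) * cmod (y m))"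
  unfolding tensor_op_def
  using summable_norm[of "\<lambda>m. tensor_entry g h i m * y m"] coordinate_estimate(1)[of g h y i]
  by (simp add: norm_mult)

lemma tensor_op_bounded:
  assumes "admissible g h" "y \<in> ell2"
  shows "tensor_op g h y \<in> ell2 \<and> ell2_norm (tensor_op g h y) \<le> tensor_bound g * ell2_norm y"
proof (rule ell2_normI)
  let ?K = "tensor_bound g" and ?a = "\<lambda>i m. cmod (tensor_entry g h i m)"
  have K: "1 \<le> ?K" by (rule tensor_bound_ge_1[OF assms(1)])
  fix N
  have ys: "summable (\<lambda>m. (cmod (y m))^2)" using assms(2) by (simp add: ell2_def)
  have "(\<Sum>i<N. (cmod (tensor_op g h y i))^2) \<le> (\<Sum>i<N. ?K * (\<Sum>m. ?a i m * (cmod (y m))^2))"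
  proof (rule sum_mono)
    fix i
    have "(cmod (tensor_op g h y i))^2 \<le> (\<Sum>m. ?a i m * cmod (y m))^2"
      by (rule power_mono[OF tensor_op_coord_le[OF assms]]) simp
    also have "\<dots> \<le> ?K * (\<Sum>m. ?a i m * (cmod (y m))^2)" by (rule coordinate_estimate(3)[OF assms])
    finally show "(cmod (tensor_op g h y i))^2 \<le> ?K * (\<Sum>m. ?a i m * (cmod (y m))^2)" .
  qed
  also have "\<dots> = ?K * (\<Sum>m. (\<Sum>i<N. ?a i m) * (cmod (y m))^2)"
    by (simp add: sum_distrib_left[symmetric] suminf_sum[symmetric] coordinate_estimate(2)[OF assms]
        sum_distrib_right)
  also have "\<dots> \<le> ?K * (\<Sum>m. ?K * (cmod (y m))^2)"
  proof (intro mult_left_mono suminf_le)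
    show "summable (\<lambda>m. (\<Sum>i<N. ?a i m) * (cmod (y m))^2)"
      by (simp only: sum_distrib_right) (rule summable_sum, rule coordinate_estimate(2)[OF assms])
  qed (use K col_sum_bound[OF assms(1)] ys in \<open>auto intro!: mult_right_mono summable_mult\<close>)
  also have "\<dots> = (?K * ell2_norm y)^2"
    using suminf_mult[OF ys, of ?K] ell2_norm_sq[OF assms(2)] by (simp add: power_mult_distrib power2_eq_square)
  finally show "(\<Sum>i<N. (cmod (tensor_op g h y i))^2) \<le> (?K * ell2_norm y)^2" .
next
  show "0 \<le> tensor_bound g * ell2_norm y"
    using tensor_bound_ge_1[OF assms(1)] ell2_norm_nonneg[OF assms(2)] by simp
qed

lemma tensor_op_ell2: "admissible g h \<Longrightarrow> y \<in> ell2 \<Longrightarrow> tensor_op g h y \<in> ell2"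
  using tensor_op_bounded by blast

lemma tensor_op_add:
  assumes "admissible g h" "x \<in> ell2" "y \<in> ell2"
  shows "tensor_op g h (\<lambda>i. x i + y i) = (\<lambda>i. tensor_op g h x i + tensor_op g h y i)"
  unfolding tensor_op_def
  by (simp add: distrib_left suminf_add tensor_op_summable[OF assms(1,2)] tensor_op_summable[OF assms(1,3)])

lemma tensor_op_scale:
  assumes "admissible g h" "x \<in> ell2"
  shows "tensor_op g h (\<lambda>i. c * x i) = (\<lambda>i. c * tensor_op g h x i)"
  unfolding tensor_op_def
  using suminf_mult[OF tensor_op_summable[OF assms], of c] by (simp add: mult.left_commute)

lemma tensor_op_diff:
  assumes "admissible g h" "x \<in> ell2" "y \<in> ell2"
  shows "tensor_op g h (\<lambda>i. x i - y i) = (\<lambda>i. tensor_op g h x i - tensor_op g h y i)"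
  unfolding tensor_op_def
  by (simp add: right_diff_distrib suminf_diff tensor_op_summable[OF assms(1,2)]
      tensor_op_summable[OF assms(1,3)])

lemma bounded_op_tensor_op: "admissible g h \<Longrightarrow> bounded_op_ell2 (tensor_op g h)"
  unfolding bounded_op_ell2_def using tensor_op_bounded tensor_op_add tensor_op_scale by blast

lemma tensor_op_continuous:
  assumes "admissible g h" "x \<in> ell2" "\<And>J. y J \<in> ell2"
    and "(\<lambda>J. ell2_norm (\<lambda>m. x m - y J m)) \<longlonglongrightarrow> 0"
  shows "(\<lambda>J. ell2_norm (\<lambda>m. tensor_op g h x m - tensor_op g h (y J) m)) \<longlonglongrightarrow> 0"
proof (rule Lim_null_comparison)
  have "ell2_norm (\<lambda>m. tensor_op g h x m - tensor_op g h (y J) m)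
          \<le> tensor_bound g * ell2_norm (\<lambda>m. x m - y J m)" for J
    using tensor_op_bounded[OF assms(1) ell2_diff[OF assms(2,3)]] tensor_op_diff[OF assms(1,2,3)]
    by metis
  then show "\<forall>\<^sub>F J in sequentially. norm (ell2_norm (\<lambda>m. tensor_op g h x m - tensor_op g h (y J) m))
               \<le> tensor_bound g * ell2_norm (\<lambda>m. x m - y J m)"
    using ell2_norm_nonneg[OF ell2_diff[OF tensor_op_ell2[OF assms(1,2)] tensor_op_ell2[OF assms(1,3)]]]
    by simp
  show "(\<lambda>J. tensor_bound g * ell2_norm (\<lambda>m. x m - y J m)) \<longlonglongrightarrow> 0"
    using tendsto_mult_right_zero[OF assms(4)] by simp
qed

lemma tensor_op_continuous_coord:
  assumes "admissible g h" "x \<in> ell2" "\<And>J. y J \<in> ell2"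
    and "(\<lambda>J. ell2_norm (\<lambda>m. x m - y J m)) \<longlonglongrightarrow> 0"
  shows "(\<lambda>J. tensor_op g h (y J) i) \<longlonglongrightarrow> tensor_op g h x i"
proof -
  let ?d = "\<lambda>J m. tensor_op g h x m - tensor_op g h (y J) m"
  have "(\<lambda>J. ?d J i) \<longlonglongrightarrow> 0"
  proof (rule Lim_null_comparison)
    show "\<forall>\<^sub>F J in sequentially. norm (?d J i) \<le> ell2_norm (?d J)"
      using ell2_coord_le_norm[OF ell2_diff[OF tensor_op_ell2[OF assms(1,2)] tensor_op_ell2[OF assms(1,3)]]]
      by simp
  qed (rule tensor_op_continuous[OF assms])
  then have "(\<lambda>J. tensor_op g h x i - ?d J i) \<longlonglongrightarrow> tensor_op g h x i - 0"
    by (intro tendsto_diff tendsto_const)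
  then show ?thesis by simp
qed

text \<open>The combinatorial core: summing over the sets \<open>S\<close> between \<open>I\<close> and \<open>B\<close> factorises, since
  each \<open>j \<in> B - I\<close> independently lies in \<open>S\<close> (factor \<open>G\<^sub>j H'\<^sub>j\<close>) or not (factor \<open>G'\<^sub>j\<close>).\<close>

lemma sum_intermediate_sets:
  fixes G H G' H' :: "nat \<Rightarrow> 'a::comm_semiring_1"
  assumes fB: "finite B" and IB: "I \<subseteq> B"
  shows "(\<Sum>S\<in>{S\<in>Pow B. I \<subseteq> S}. ((\<Prod>j\<in>S - I. G j) * (\<Prod>j\<in>I. H j)) *
                                     ((\<Prod>j\<in>B - S. G' j) * (\<Prod>j\<in>S. H' j)))
         = (\<Prod>j\<in>I. H j * H' j) * (\<Prod>j\<in>B - I. G j * H' j + G' j)"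
proof -
  have fI: "finite I" using IB fB finite_subset by blast
  have "(\<Sum>S\<in>{S\<in>Pow B. I \<subseteq> S}. ((\<Prod>j\<in>S - I. G j) * (\<Prod>j\<in>I. H j)) *
                                  ((\<Prod>j\<in>B - S. G' j) * (\<Prod>j\<in>S. H' j)))
      = (\<Sum>R\<in>Pow (B - I). (\<Prod>j\<in>I. H j * H' j) * ((\<Prod>j\<in>R. G j * H' j) * (\<Prod>j\<in>(B - I) - R. G' j)))"
  proof (rule sum.reindex_bij_witness[of _ "\<lambda>R. R \<union> I" "\<lambda>S. S - I"])
    fix S assume S: "S \<in> {S\<in>Pow B. I \<subseteq> S}"
    define R where "R = S - I"
    have SR: "S = R \<union> I" using S by (auto simp: R_def)
    have fR: "finite R" using S fB finite_subset by (auto simp: R_def)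
    have e1: "B - S = (B - I) - R" using S by (auto simp: R_def)
    have e2: "(\<Prod>j\<in>R \<union> I. H' j) = (\<Prod>j\<in>R. H' j) * (\<Prod>j\<in>I. H' j)"
      by (rule prod.union_disjoint[OF fR fI]) (auto simp: R_def)
    show "(\<Prod>j\<in>I. H j * H' j) * ((\<Prod>j\<in>S - I. G j * H' j) * (\<Prod>j\<in>(B - I) - (S - I). G' j))
        = ((\<Prod>j\<in>S - I. G j) * (\<Prod>j\<in>I. H j)) * ((\<Prod>j\<in>B - S. G' j) * (\<Prod>j\<in>S. H' j))"
      unfolding R_def[symmetric] e1[symmetric] using e2 by (simp add: SR[symmetric] prod.distrib mult_ac)
  qed (use IB in auto)
  also have "\<dots> = (\<Prod>j\<in>I. H j * H' j) * (\<Prod>j\<in>B - I. G j * H' j + G' j)"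
    by (simp add: sum_distrib_left[symmetric] prod_add fB)
  finally show ?thesis .
qed

text \<open>Factorwise multiplication
  \<open>[[1, G], [0, H]] \<cdot> [[1, G'], [0, H']] = [[1, G H' + G'], [0, H H']]\<close> on the level of entries.\<close>

lemma tensor_entry_mult:
  "(\<Sum>m. tensor_entry G H i m * tensor_entry G' H' m k) =
     tensor_entry (\<lambda>j. G j * H' j + G' j) (\<lambda>j. H j * H' j) i k"
proof -
  define B where "B = bits k"
  define I where "I = bits i"
  have fB: "finite B" by (simp add: B_def)
  define F where "F S = (if I \<subseteq> S then (\<Prod>j\<in>S - I. G j) * (\<Prod>j\<in>I. H j) else 0) *
      (if S \<subseteq> B then (\<Prod>j\<in>B - S. G' j) * (\<Prod>j\<in>S. H' j) else 0)" for S
  have MF: "tensor_entry G H i m * tensor_entry G' H' m k = F (bits m)" for m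
    by (simp add: tensor_entry_def F_def B_def I_def)
  have "(\<Sum>m. tensor_entry G H i m * tensor_entry G' H' m k)
          = (\<Sum>m | bits m \<subseteq> B. tensor_entry G H i m * tensor_entry G' H' m k)"
    by (rule suminf_finite) (auto simp: finite_codes fB B_def tensor_entry_zero)
  also have "\<dots> = (\<Sum>S\<in>Pow B. F S)" unfolding MF by (rule sum_over_codes[OF fB])
  also have "\<dots> = tensor_entry (\<lambda>j. G j * H' j + G' j) (\<lambda>j. H j * H' j) i k"
  proof (cases "I \<subseteq> B")
    case False
    then have "\<And>S. S \<in> Pow B \<Longrightarrow> F S = 0" by (auto simp: F_def)
    then show ?thesis using False by (simp add: tensor_entry_def I_def B_def)
  next
    case True
    have "(\<Sum>S\<in>Pow B. F S) = (\<Sum>S\<in>{S\<in>Pow B. I \<subseteq> S}. F S)"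
      by (rule sum.mono_neutral_right) (auto simp: fB F_def)
    also have "\<dots> = (\<Prod>j\<in>I. H j * H' j) * (\<Prod>j\<in>B - I. G j * H' j + G' j)"
      unfolding sum_intermediate_sets[OF fB True, symmetric] by (intro sum.cong refl) (auto simp: F_def)
    also have "\<dots> = tensor_entry (\<lambda>j. G j * H' j + G' j) (\<lambda>j. H j * H' j) i k"
      using True by (simp add: tensor_entry_def I_def B_def mult.commute)
    finally show ?thesis .
  qed
  finally show ?thesis .
qed

lemma admissible_comp:
  assumes "admissible G H" "admissible G' H'"
  shows "admissible (\<lambda>j. G j * H' j + G' j) (\<lambda>j. H j * H' j)"
  unfolding admissible_def
proof
  show "unimodular (\<lambda>j. H j * H' j)"
    using assms by (simp add: admissible_def unimodular_def norm_mult)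
  have "summable (\<lambda>j. cmod (G j) + cmod (G' j))"
    using assms by (intro summable_add) (auto simp: admissible_def)
  then show "summable (\<lambda>j. cmod (G j * H' j + G' j))"
  proof (rule summable_comparison_test')
    fix j
    show "norm (cmod (G j * H' j + G' j)) \<le> cmod (G j) + cmod (G' j)"
      using norm_triangle_ineq[of "G j * H' j" "G' j"] assms(2)
      by (simp add: admissible_def unimodular_def norm_mult)
  qed
qed

lemma tensor_op_truncate: "tensor_op G H (truncate J x) m = (\<Sum>k<J. tensor_entry G H m k * x k)"
  unfolding tensor_op_def truncate_def by (subst suminf_finite[of "{..<J}"]) auto

text \<open>Hence the operators compose factorwise.  The identity is checked on truncated inputs,
  where all sums are finite, and extended by continuity.\<close>

lemma tensor_op_comp:
  assumes "admissible G H" "admissible G' H'" "x \<in> ell2"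
  shows "tensor_op G H (tensor_op G' H' x) = tensor_op (\<lambda>j. G j * H' j + G' j) (\<lambda>j. H j * H' j) x"
proof
  fix i
  let ?G = "\<lambda>j. G j * H' j + G' j" and ?H = "\<lambda>j. H j * H' j"
  define y where "y J = tensor_op G' H' (truncate J x)" for J
  have y: "y J \<in> ell2" for J unfolding y_def by (rule tensor_op_ell2[OF assms(2) truncate_ell2])
  have lim1: "(\<lambda>J. tensor_op G H (y J) i) \<longlonglongrightarrow> tensor_op G H (tensor_op G' H' x) i"
    unfolding y_def
    by (intro tensor_op_continuous_coord[OF assms(1) tensor_op_ell2[OF assms(2,3)]] tensor_op_ell2
        truncate_ell2 tensor_op_continuous[OF assms(2,3)] truncate_tendsto assms)
  have eq: "tensor_op G H (y J) i = (\<Sum>k<J. tensor_entry ?G ?H i k * x k)" for J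
  proof -
    have sm: "summable (\<lambda>m. tensor_entry G H i m * tensor_entry G' H' m k)" for k
      by (rule summable_finite[of "{..k}"]) (auto dest: tensor_entry_nonzero_le)
    have yJ: "y J = (\<lambda>m. \<Sum>k<J. tensor_entry G' H' m k * x k)"
      by (auto simp: y_def tensor_op_truncate)
    have "tensor_op G H (y J) i = (\<Sum>m. tensor_entry G H i m * (\<Sum>k<J. tensor_entry G' H' m k * x k))"
      by (simp only: tensor_op_def yJ)
    also have "\<dots> = (\<Sum>m. \<Sum>k<J. tensor_entry G H i m * tensor_entry G' H' m k * x k)"
      by (simp add: sum_distrib_left mult.assoc)
    also have "\<dots> = (\<Sum>k<J. \<Sum>m. tensor_entry G H i m * tensor_entry G' H' m k * x k)"
      by (rule suminf_sum) (rule summable_mult2[OF sm])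
    also have "\<dots> = (\<Sum>k<J. (\<Sum>m. tensor_entry G H i m * tensor_entry G' H' m k) * x k)"
      by (intro sum.cong refl suminf_mult2[OF sm, symmetric])
    finally show ?thesis by (simp add: tensor_entry_mult)
  qed
  have lim2: "(\<lambda>J. tensor_op G H (y J) i) \<longlonglongrightarrow> tensor_op ?G ?H x i"
    unfolding eq using summable_LIMSEQ[OF tensor_op_summable[OF admissible_comp[OF assms(1,2)] assms(3)]]
    by (simp add: tensor_op_def)
  show "tensor_op G H (tensor_op G' H' x) i = tensor_op ?G ?H x i"
    by (rule LIMSEQ_unique[OF lim1 lim2])
qed

lemma tensor_entry_identity: "tensor_entry (\<lambda>_. 0) (\<lambda>_. 1) i m = (if m = i then 1 else 0)"
proof (cases "bits i \<subseteq> bits m \<and> bits m \<noteq> bits i")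
  case True
  then have "bits m - bits i \<noteq> {}" "m \<noteq> i" by auto
  then show ?thesis using True by (simp add: tensor_entry_def card_gt_0_iff)
next
  case False
  then have "bits i \<subseteq> bits m \<longleftrightarrow> m = i" by (metis set_decode_inverse subset_refl)
  then show ?thesis using False by (simp add: tensor_entry_def)
qed

lemma tensor_op_identity: "tensor_op (\<lambda>_. 0) (\<lambda>_. 1) x = x"
proof
  fix i
  show "tensor_op (\<lambda>_. 0) (\<lambda>_. 1) x i = x i"
    unfolding tensor_op_def tensor_entry_identity by (subst suminf_finite[of "{i}"]) auto
qed

text \<open>For \<open>|l| = 1\<close>: \<open>|l\<^sup>n - 1| \<le> n |l - 1|\<close>, so powers of admissible factors are admissible.\<close>

lemma norm_power_minus_one_le: "cmod l = 1 \<Longrightarrow> cmod (l ^ n - 1) \<le> real n * cmod (l - 1)"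
proof (induction n)
  case (Suc n)
  have "l ^ Suc n - 1 = l * (l ^ n - 1) + (l - 1)" by (simp add: algebra_simps)
  then have "cmod (l ^ Suc n - 1) \<le> cmod (l * (l ^ n - 1)) + cmod (l - 1)" by (metis norm_triangle_ineq)
  also have "\<dots> = cmod (l ^ n - 1) + cmod (l - 1)" using Suc.prems by (simp add: norm_mult)
  also have "\<dots> \<le> real n * cmod (l - 1) + cmod (l - 1)" using Suc by simp
  finally show ?case by (simp add: algebra_simps)
qed simp

lemma admissible_power:
  assumes "admissible (\<lambda>j. t j * (lam j - 1)) lam"
  shows "admissible (\<lambda>j. t j * (lam j ^ n - 1)) (\<lambda>j. lam j ^ n)"
  unfolding admissible_def
proof
  show "unimodular (\<lambda>j. lam j ^ n)"
    using assms by (simp add: admissible_def unimodular_def norm_power)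
  have "summable (\<lambda>j. real n * cmod (t j * (lam j - 1)))"
    using assms by (intro summable_mult) (simp add: admissible_def)
  then show "summable (\<lambda>j. cmod (t j * (lam j ^ n - 1)))"
  proof (rule summable_comparison_test')
    fix j
    have "cmod (lam j) = 1" using assms by (simp add: admissible_def unimodular_def)
    then show "norm (cmod (t j * (lam j ^ n - 1))) \<le> real n * cmod (t j * (lam j - 1))"
      using mult_left_mono[OF norm_power_minus_one_le[of "lam j" n], of "cmod (t j)"]
      by (simp add: norm_mult mult.left_commute)
  qed
qed

text \<open>Powers: \<open>[[1, t(\<lambda> - 1)], [0, \<lambda>]]\<^sup>n = [[1, t(\<lambda>\<^sup>n - 1)], [0, \<lambda>\<^sup>n]]\<close> factorwise.\<close>

lemma tensor_op_power:
  assumes "admissible (\<lambda>j. t j * (lam j - 1)) lam" "x \<in> ell2"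
  shows "(tensor_op (\<lambda>j. t j * (lam j - 1)) lam ^^ n) x
           = tensor_op (\<lambda>j. t j * (lam j ^ n - 1)) (\<lambda>j. lam j ^ n) x"
proof (induction n)
  case 0
  have "(\<lambda>j. t j * (lam j ^ 0 - 1)) = (\<lambda>_. 0)" "(\<lambda>j. lam j ^ 0) = (\<lambda>_. 1)" by auto
  then show ?case by (simp add: tensor_op_identity)
next
  case (Suc n)
  have g: "(\<lambda>j. t j * (lam j - 1) * lam j ^ n + t j * (lam j ^ n - 1)) = (\<lambda>j. t j * (lam j ^ Suc n - 1))"
    by (simp add: algebra_simps)
  have h: "(\<lambda>j. lam j * lam j ^ n) = (\<lambda>j. lam j ^ Suc n)" by simp
  have "(tensor_op (\<lambda>j. t j * (lam j - 1)) lam ^^ Suc n) x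
      = tensor_op (\<lambda>j. t j * (lam j - 1)) lam (tensor_op (\<lambda>j. t j * (lam j ^ n - 1)) (\<lambda>j. lam j ^ n) x)"
    using Suc by simp
  also have "\<dots> = tensor_op (\<lambda>j. t j * (lam j - 1) * lam j ^ n + t j * (lam j ^ n - 1))
                             (\<lambda>j. lam j * lam j ^ n) x"
    by (rule tensor_op_comp[OF assms(1) admissible_power[OF assms(1)] assms(2)])
  finally show ?case by (simp only: g h)
qed

section \<open>The model operator and its eigenvectors\<close>

text \<open>For unimodular \<open>\<lambda>\<^sub>j\<close> the factor \<open>[[1, 2\<^sup>j(\<lambda>\<^sub>j - 1)], [0, \<lambda>\<^sub>j]]\<close> has the eigenvectors
  \<open>e\<^sub>0\<close> (eigenvalue 1) and \<open>e\<^sub>0 + 2\<^sup>-\<^sup>j e\<^sub>1\<close> (eigenvalue \<open>\<lambda>\<^sub>j\<close>).\<close>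

definition model_op :: "(nat \<Rightarrow> complex) \<Rightarrow> (nat \<Rightarrow> complex) \<Rightarrow> nat \<Rightarrow> complex" where
  "model_op lam = tensor_op (\<lambda>j. 2^j * (lam j - 1)) lam"

lemma summable_of_admissible_model:
  assumes "admissible (\<lambda>j. 2^j * (lam j - 1)) lam"
  shows "summable (\<lambda>j. cmod (lam j - 1))"
proof -
  have "summable (\<lambda>j. cmod ((2::complex)^j * (lam j - 1)))" using assms by (simp add: admissible_def)
  then show ?thesis
    by (rule summable_comparison_test') (simp add: norm_mult norm_power mult_le_cancel_right1)
qed

text \<open>The tensor product of the eigenvectors selected by \<open>a \<in> {0,1}\<^sup>\<nat>\<close>.\<close>

definition eig_weight :: "nat \<Rightarrow> complex" where
  "eig_weight j = of_real ((1/2)^j)"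

definition eigvec :: "(nat \<Rightarrow> bool) \<Rightarrow> nat \<Rightarrow> complex" where
  "eigvec a m = (if bits m \<subseteq> {j. a j} then (\<Prod>j\<in>bits m. eig_weight j) else 0)"

definition eigvec_bound :: "nat \<Rightarrow> real" where
  "eigvec_bound m = (\<Prod>j\<in>bits m. (1/4)^j)"

lemma eigvec_bound_nonneg: "0 \<le> eigvec_bound m"
  by (simp add: eigvec_bound_def prod_nonneg)

lemma summable_eigvec_bound: "summable eigvec_bound"
proof (rule summable_bounded_nonneg[THEN conjunct1])
  let ?g = "\<lambda>j. complex_of_real ((1/4)^j)"
  have g: "summable (\<lambda>j. cmod (?g j))" by (simp add: norm_power summable_geometric)
  fix N
  have "(\<Sum>m<N. eigvec_bound m) \<le> (\<Sum>m | bits m \<subseteq> {..<N}. eigvec_bound m)"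
    by (intro sum_mono2 finite_codes) (auto simp: eigvec_bound_nonneg dest: bit_less)
  also have "\<dots> = (\<Sum>S\<in>Pow {..<N}. \<Prod>j\<in>S. (1/4)^j)"
    unfolding eigvec_bound_def by (rule sum_over_codes) simp
  also have "\<dots> = (\<Prod>j<N. 1 + cmod (?g j))" by (simp add: sum_Pow_prod norm_power)
  also have "\<dots> \<le> exp (\<Sum>j. cmod (?g j))" by (rule prod_one_plus_le_exp_suminf[OF g]) simp
  finally show "(\<Sum>m<N. eigvec_bound m) \<le> exp (\<Sum>j. cmod (?g j))" .
qed (rule eigvec_bound_nonneg)

lemma cmod_eigvec_sq: "(cmod (eigvec a m))^2 = (if bits m \<subseteq> {j. a j} then eigvec_bound m else 0)"
proof -
  have "(\<Prod>j\<in>bits m. (1/2::real)^j)^2 = (\<Prod>j\<in>bits m. (1/4)^j)"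
    by (simp add: power2_eq_square prod.distrib[symmetric] power_mult_distrib[symmetric])
  then show ?thesis
    by (simp add: eigvec_def eigvec_bound_def eig_weight_def prod_norm[symmetric] norm_power)
qed

lemma eigvec_ell2: "eigvec a \<in> ell2"
  unfolding ell2_def mem_Collect_eq
  by (rule summable_comparison_test'[OF summable_eigvec_bound])
     (auto simp: cmod_eigvec_sq eigvec_bound_nonneg)

definition prefix :: "nat \<Rightarrow> (nat \<Rightarrow> bool) \<Rightarrow> nat \<Rightarrow> bool" where
  "prefix J a = (\<lambda>j. a j \<and> j < J)"

lemma finite_prefix: "finite {j. prefix J a j}"
  by (rule finite_subset[of _ "{..<J}"]) (auto simp: prefix_def)

lemma eigvec_prefix_eq:
  assumes "i \<le> J" shows "eigvec (prefix J a) i = eigvec a i"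
proof -
  have "\<forall>j\<in>bits i. j < J" using bit_less assms less_le_trans by blast
  then have "bits i \<subseteq> {j. prefix J a j} \<longleftrightarrow> bits i \<subseteq> {j. a j}" by (auto simp: prefix_def)
  then show ?thesis by (simp add: eigvec_def)
qed

lemma eigvec_prefix_dist:
  "ell2_norm (\<lambda>m. eigvec a m - eigvec (prefix J a) m) \<le> sqrt (\<Sum>m. if m < J then 0 else eigvec_bound m)"
proof -
  have st: "summable (\<lambda>m. if m < J then 0 else eigvec_bound m)"
    by (rule summable_comparison_test'[OF summable_eigvec_bound]) (auto simp: eigvec_bound_nonneg)
  have le: "(cmod (eigvec a m - eigvec (prefix J a) m))^2 \<le> (if m < J then 0 else eigvec_bound m)" for m
  proof (cases "m < J")
    case True then show ?thesis using eigvec_prefix_eq[of m J a] by simp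
  next
    case False
    show ?thesis
    proof (cases "bits m \<subseteq> {j. prefix J a j}")
      case True
      then have "bits m \<subseteq> {j. a j}" by (auto simp: prefix_def)
      then show ?thesis using True False by (simp add: eigvec_def eigvec_bound_nonneg)
    next
      case F2: False
      then have "eigvec (prefix J a) m = 0" by (simp add: eigvec_def)
      then show ?thesis using False cmod_eigvec_sq[of a m] by (simp add: eigvec_bound_nonneg)
    qed
  qed
  have d: "(\<lambda>m. eigvec a m - eigvec (prefix J a) m) \<in> ell2" by (rule ell2_diff[OF eigvec_ell2 eigvec_ell2])
  show ?thesis unfolding ell2_norm_def
    by (intro real_sqrt_le_mono suminf_le le st) (use d in \<open>simp add: ell2_def\<close>)
qed

lemma eigvec_prefix_bound_tendsto: "(\<lambda>J. sqrt (\<Sum>m. if m < J then 0 else eigvec_bound m)) \<longlonglongrightarrow> 0"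
  using tendsto_real_sqrt[OF tail_sum_tendsto_0[OF summable_eigvec_bound]] by simp

lemma eigvec_prefix_tendsto: "(\<lambda>J. ell2_norm (\<lambda>m. eigvec a m - eigvec (prefix J a) m)) \<longlonglongrightarrow> 0"
proof (rule Lim_null_comparison[OF _ eigvec_prefix_bound_tendsto])
  show "\<forall>\<^sub>F J in sequentially. norm (ell2_norm (\<lambda>m. eigvec a m - eigvec (prefix J a) m))
          \<le> sqrt (\<Sum>m. if m < J then 0 else eigvec_bound m)"
    using eigvec_prefix_dist ell2_norm_nonneg[OF ell2_diff[OF eigvec_ell2 eigvec_ell2]] by simp
qed

text \<open>Finitely supported choices give entries of the matrix with factors \<open>[[1,1],[0,2\<^sup>-\<^sup>j]]\<close>.\<close>

lemma eigvec_finite_entry: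
  "finite {j. b j} \<Longrightarrow> eigvec b m = tensor_entry (\<lambda>_. 1) eig_weight m (set_encode {j. b j})"
  by (simp add: eigvec_def tensor_entry_def)

lemma two_pow_eig_weight: "(2::complex)^j * eig_weight j = 1"
  by (simp add: eig_weight_def power_mult_distrib[symmetric])

lemma model_op_eigvec_finite:
  assumes "finite {j. b j}"
  shows "model_op lam (eigvec b) i = (\<Prod>j\<in>{j. b j}. lam j) * eigvec b i"
proof -
  define Z where "Z = {j. b j}"
  have fZ: "finite Z" using assms by (simp add: Z_def)
  have g: "(\<lambda>j. 2^j * (lam j - 1) * eig_weight j + 1) = lam"
    using two_pow_eig_weight by (auto simp: algebra_simps)
  have "model_op lam (eigvec b) i
      = (\<Sum>m. tensor_entry (\<lambda>j. 2^j * (lam j - 1)) lam i m * tensor_entry (\<lambda>_. 1) eig_weight m (set_encode Z))"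
    by (simp add: model_op_def tensor_op_def eigvec_finite_entry[OF assms] Z_def)
  also have "\<dots> = tensor_entry lam (\<lambda>j. lam j * eig_weight j) i (set_encode Z)"
    using tensor_entry_mult[of "\<lambda>j. 2^j * (lam j - 1)" lam i "\<lambda>_. 1" eig_weight "set_encode Z"]
    by (simp add: g)
  also have "\<dots> = (\<Prod>j\<in>Z. lam j) * eigvec b i"
  proof (cases "bits i \<subseteq> Z")
    case True
    have "(\<Prod>j\<in>Z. lam j) = (\<Prod>j\<in>Z - bits i. lam j) * (\<Prod>j\<in>bits i. lam j)"
      by (rule prod.subset_diff[OF True fZ])
    then show ?thesis using True fZ by (simp add: tensor_entry_def eigvec_def Z_def prod.distrib)
  qed (use fZ in \<open>simp add: tensor_entry_def eigvec_def Z_def\<close>)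
  finally show ?thesis by (simp add: Z_def)
qed

definition partial_eigval :: "(nat \<Rightarrow> complex) \<Rightarrow> nat \<Rightarrow> (nat \<Rightarrow> bool) \<Rightarrow> complex" where
  "partial_eigval lam J a = (\<Prod>j<J. if a j then lam j else 1)"

definition eigval :: "(nat \<Rightarrow> complex) \<Rightarrow> (nat \<Rightarrow> bool) \<Rightarrow> complex" where
  "eigval lam a = lim (\<lambda>J. partial_eigval lam J a)"

lemma partial_eigval_prefix: "partial_eigval lam J a = (\<Prod>j\<in>{j. prefix J a j}. lam j)"
proof -
  have "{j. prefix J a j} = {j\<in>{..<J}. a j}" by (auto simp: prefix_def)
  moreover have "(\<Prod>j\<in>{j\<in>{..<J}. a j}. lam j) = (\<Prod>j<J. if a j then lam j else 1)"
    by (rule prod.inter_filter) simp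
  ultimately show ?thesis unfolding partial_eigval_def by simp
qed

lemma cmod_partial_eigval: "unimodular lam \<Longrightarrow> cmod (partial_eigval lam J a) = 1"
  by (simp add: partial_eigval_def unimodular_def prod_norm[symmetric] if_distrib cong: if_cong)

text \<open>The partial products form a Cauchy sequence, since consecutive ones differ by at most
  \<open>|\<lambda>\<^sub>J - 1|\<close>.\<close>

lemma partial_eigval_tendsto:
  assumes "unimodular lam" "summable (\<lambda>j. cmod (lam j - 1))"
  shows "(\<lambda>J. partial_eigval lam J a) \<longlonglongrightarrow> eigval lam a"
proof -
  let ?f = "\<lambda>J. partial_eigval lam J a"
  have "summable (\<lambda>J. ?f (Suc J) - ?f J)"
  proof (rule summable_norm_cancel, rule summable_comparison_test'[OF assms(2)])
    fix J
    have "?f (Suc J) - ?f J = ?f J * ((if a J then lam J else 1) - 1)"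
      by (simp add: partial_eigval_def algebra_simps)
    then show "norm (norm (?f (Suc J) - ?f J)) \<le> cmod (lam J - 1)"
      using cmod_partial_eigval[OF assms(1), of J a] by (simp add: norm_mult)
  qed
  then have "(\<lambda>J. ?f 0 + (\<Sum>i<J. ?f (Suc i) - ?f i)) \<longlonglongrightarrow> ?f 0 + (\<Sum>i. ?f (Suc i) - ?f i)"
    by (intro tendsto_add tendsto_const summable_LIMSEQ)
  moreover have "(\<lambda>J. ?f 0 + (\<Sum>i<J. ?f (Suc i) - ?f i)) = ?f"
    by (simp add: sum_lessThan_telescope[of ?f])
  ultimately have "?f \<longlonglongrightarrow> ?f 0 + (\<Sum>i. ?f (Suc i) - ?f i)" by simp
  then show ?thesis by (metis eigval_def limI)
qed

lemma cmod_eigval: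
  assumes "unimodular lam" "summable (\<lambda>j. cmod (lam j - 1))"
  shows "cmod (eigval lam a) = 1"
proof -
  have "(\<lambda>J. cmod (partial_eigval lam J a)) \<longlonglongrightarrow> cmod (eigval lam a)"
    by (intro tendsto_norm partial_eigval_tendsto assms)
  then show ?thesis using cmod_partial_eigval[OF assms(1)] by (simp add: LIMSEQ_const_iff)
qed

text \<open>Each \<open>eigvec a\<close> is an eigenvector of the model operator with eigenvalue \<open>eigval lam a\<close>:
  pass to the limit from the finitely supported prefixes.\<close>

lemma model_op_eigvec:
  assumes "admissible (\<lambda>j. 2^j * (lam j - 1)) lam"
  shows "model_op lam (eigvec a) = (\<lambda>i. eigval lam a * eigvec a i)"
proof
  fix i
  have u: "unimodular lam" using assms by (simp add: admissible_def)
  note s = summable_of_admissible_model[OF assms]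
  have lim1: "(\<lambda>J. model_op lam (eigvec (prefix J a)) i) \<longlonglongrightarrow> model_op lam (eigvec a) i"
    unfolding model_op_def
    by (rule tensor_op_continuous_coord[OF assms eigvec_ell2 eigvec_ell2 eigvec_prefix_tendsto])
  have e: "model_op lam (eigvec (prefix J a)) i = partial_eigval lam J a * eigvec (prefix J a) i" for J
    using model_op_eigvec_finite[OF finite_prefix[of J a], of lam i] by (simp add: partial_eigval_prefix)
  have ev: "(\<lambda>J. eigvec (prefix J a) i) \<longlonglongrightarrow> eigvec a i"
  proof (rule Lim_transform_eventually[OF tendsto_const])
    show "\<forall>\<^sub>F J in sequentially. eigvec a i = eigvec (prefix J a) i"
      using eventually_ge_at_top[of i] by eventually_elim (simp add: eigvec_prefix_eq)
  qed
  have lim2: "(\<lambda>J. model_op lam (eigvec (prefix J a)) i) \<longlonglongrightarrow> eigval lam a * eigvec a i"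
    unfolding e by (intro tendsto_mult partial_eigval_tendsto u s ev)
  show "model_op lam (eigvec a) i = eigval lam a * eigvec a i"
    by (rule LIMSEQ_unique[OF lim1 lim2])
qed

lemma tail_sum_le_third:
  fixes d :: "nat \<Rightarrow> real"
  assumes "\<And>j. 0 \<le> d j" "\<And>j. d (Suc j) \<le> d j / 4"
  shows "(\<Sum>i\<in>{Suc j..<Suc j + k}. d i) \<le> d j / 3"
proof -
  have "(\<Sum>i\<in>{Suc j..<Suc j + k}. d i) + 4/3 * d (Suc j + k) \<le> 4/3 * d (Suc j)"
  proof (induction k)
    case (Suc k)
    have "(\<Sum>i\<in>{Suc j..<Suc j + Suc k}. d i) = (\<Sum>i\<in>{Suc j..<Suc j + k}. d i) + d (Suc j + k)"
      by (simp add: sum.atLeastLessThan_Suc)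
    moreover have "d (Suc j + Suc k) \<le> d (Suc j + k) / 4" using assms(2)[of "Suc j + k"] by simp
    ultimately show ?case using Suc.IH by linarith
  qed simp
  moreover have "d (Suc j) \<le> d j / 4" by (rule assms(2))
  moreover have "0 \<le> d (Suc j + k)" by (rule assms(1))
  ultimately show ?thesis by linarith
qed

lemma tail_product_close_to_one:
  assumes u: "unimodular lam" and dd: "\<And>j. cmod (lam (Suc j) - 1) \<le> cmod (lam j - 1) / 4"
  shows "cmod ((\<Prod>i\<in>{Suc j..<J}. if b i then lam i else 1) - 1) \<le> cmod (lam j - 1) / 3"
proof -
  let ?f = "\<lambda>i. if b i then lam i else 1"
  have "cmod ((\<Prod>i\<in>{Suc j..<J}. ?f i) - 1) = cmod ((\<Prod>i\<in>{Suc j..<J}. ?f i) - (\<Prod>i\<in>{Suc j..<J}. 1))"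
    by simp
  also have "\<dots> \<le> (\<Sum>i\<in>{Suc j..<J}. cmod (?f i - 1))"
    by (rule norm_prod_diff) (use u in \<open>simp_all add: unimodular_def\<close>)
  also have "\<dots> \<le> (\<Sum>i\<in>{Suc j..<J}. cmod (lam i - 1))"
    by (intro sum_mono) simp
  also have "\<dots> \<le> (\<Sum>i\<in>{Suc j..<Suc j + (J - Suc j)}. cmod (lam i - 1))"
    by (intro sum_mono2) auto
  also have "\<dots> \<le> cmod (lam j - 1) / 3"
    by (rule tail_sum_le_third[where d="\<lambda>i. cmod (lam i - 1)", OF _ dd]) simp
  finally show ?thesis .
qed

text \<open>Two choice sequences first differing at \<open>j\<close> have partial eigenvalues at distance at
  least \<open>|\<lambda>\<^sub>j - 1|/3\<close>: the common prefix is unimodular and the tails are close to 1.\<close>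

lemma partial_eigval_separated:
  assumes u: "unimodular lam" and dd: "\<And>j. cmod (lam (Suc j) - 1) \<le> cmod (lam j - 1) / 4"
    and eq: "\<And>i. i < j \<Longrightarrow> a i = a' i" and aj: "a j" "\<not> a' j" and jJ: "j < J"
  shows "cmod (lam j - 1) / 3 \<le> cmod (partial_eigval lam J a - partial_eigval lam J a')"
proof -
  define f where "f b i = (if b i then lam i else 1)" for b i
  define Q where "Q b = (\<Prod>i\<in>{Suc j..<J}. f b i)" for b
  define P where "P = (\<Prod>i<j. f a i)"
  have split: "partial_eigval lam J b = (\<Prod>i<j. f b i) * f b j * Q b" for b
  proof -
    have "partial_eigval lam J b = (\<Prod>i\<in>{..<Suc j} \<union> {Suc j..<J}. f b i)"
      unfolding partial_eigval_def f_def by (rule prod.cong) (use jJ in auto)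
    also have "\<dots> = (\<Prod>i<Suc j. f b i) * Q b"
      unfolding Q_def by (rule prod.union_disjoint) auto
    finally show ?thesis by simp
  qed
  have Pa': "(\<Prod>i<j. f a' i) = P" unfolding P_def f_def by (rule prod.cong) (auto simp: eq)
  have nf: "cmod (f b i) = 1" for b i using u by (simp add: f_def unimodular_def)
  have nP: "cmod P = 1" by (simp add: P_def prod_norm[symmetric] nf)
  have Qb: "cmod (Q b - 1) \<le> cmod (lam j - 1) / 3" for b
    unfolding Q_def f_def by (rule tail_product_close_to_one[OF u dd])
  have nl: "cmod (lam j) = 1" using u by (simp add: unimodular_def)
  have diff: "partial_eigval lam J a - partial_eigval lam J a' = P * (lam j * Q a - Q a')"
    using split[of a] split[of a'] aj Pa' P_def by (simp add: f_def algebra_simps)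
  have "lam j - 1 = (lam j * Q a - Q a') - lam j * (Q a - 1) + (Q a' - 1)" by (simp add: algebra_simps)
  then have "cmod (lam j - 1) \<le> cmod (lam j * Q a - Q a' - lam j * (Q a - 1)) + cmod (Q a' - 1)"
    by (metis norm_triangle_ineq)
  also have "\<dots> \<le> cmod (lam j * Q a - Q a') + cmod (lam j * (Q a - 1)) + cmod (Q a' - 1)"
    using norm_triangle_ineq4 by simp
  also have "\<dots> \<le> cmod (lam j * Q a - Q a') + cmod (lam j - 1) / 3 + cmod (lam j - 1) / 3"
    using Qb[of a] Qb[of a'] by (simp add: norm_mult nl)
  finally have "cmod (lam j - 1) / 3 \<le> cmod (lam j * Q a - Q a')" by simp
  also have "\<dots> = cmod (partial_eigval lam J a - partial_eigval lam J a')"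
    by (simp add: diff norm_mult nP)
  finally show ?thesis .
qed

lemma eigval_separated:
  assumes u: "unimodular lam" and s: "summable (\<lambda>j. cmod (lam j - 1))"
    and dd: "\<And>j. cmod (lam (Suc j) - 1) \<le> cmod (lam j - 1) / 4"
    and eq: "\<And>i. i < j \<Longrightarrow> a i = a' i" and aj: "a j" "\<not> a' j"
  shows "cmod (lam j - 1) / 3 \<le> cmod (eigval lam a - eigval lam a')"
proof (rule LIMSEQ_le_const)
  show "(\<lambda>J. cmod (partial_eigval lam J a - partial_eigval lam J a'))
          \<longlonglongrightarrow> cmod (eigval lam a - eigval lam a')"
    by (intro tendsto_norm tendsto_diff partial_eigval_tendsto u s)
  show "\<exists>N. \<forall>J\<ge>N. cmod (lam j - 1) / 3 \<le> cmod (partial_eigval lam J a - partial_eigval lam J a')"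
    by (intro exI[of _ "Suc j"] allI impI partial_eigval_separated[where j=j and a=a and a'=a', OF u dd eq aj]) auto
qed

lemma eigval_inj:
  assumes u: "unimodular lam" and s: "summable (\<lambda>j. cmod (lam j - 1))"
    and dd: "\<And>j. cmod (lam (Suc j) - 1) \<le> cmod (lam j - 1) / 4"
    and ne: "\<And>j. lam j \<noteq> 1"
  shows "inj (eigval lam)"
proof (rule injI, rule ccontr)
  fix a a' assume same: "eigval lam a = eigval lam a'" and "a \<noteq> a'"
  then obtain j0 where "a j0 \<noteq> a' j0" by auto
  define j where "j = (LEAST j. a j \<noteq> a' j)"
  have j: "a j \<noteq> a' j" unfolding j_def by (rule LeastI[of _ j0]) fact
  have eqb: "\<And>i. i < j \<Longrightarrow> a i = a' i" unfolding j_def using not_less_Least by blast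
  have pos: "0 < cmod (lam j - 1) / 3" using ne[of j] by simp
  show False
  proof (cases "a j")
    case True
    then show False using eigval_separated[OF u s dd, of j a a'] eqb j same pos by simp
  next
    case False
    then show False using eigval_separated[OF u s dd, of j a' a] eqb j same pos by simp
  qed
qed
section \<open>The spectral measure\<close>

abbreviation fair_coin :: "bool measure" where
  "fair_coin \<equiv> measure_pmf (bernoulli_pmf (1/2))"

definition coin_tosses :: "(nat \<Rightarrow> bool) measure" where
  "coin_tosses = PiM UNIV (\<lambda>_. fair_coin)"

definition cylinder :: "nat \<Rightarrow> (nat \<Rightarrow> bool) \<Rightarrow> (nat \<Rightarrow> bool) set" where
  "cylinder J b = prod_emb UNIV (\<lambda>_. fair_coin) {..<J} (PiE {..<J} (\<lambda>j. {b j}))"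

definition spectral_measure :: "(nat \<Rightarrow> complex) \<Rightarrow> complex measure" where
  "spectral_measure lam = distr coin_tosses borel (eigval lam)"

lemma prob_space_coin_tosses: "prob_space coin_tosses"
  unfolding coin_tosses_def by (rule prob_space_PiM) (simp add: prob_space_measure_pmf)

lemma cylinder_iff: "a \<in> cylinder J b \<longleftrightarrow> (\<forall>j<J. a j = b j)"
  by (auto simp: cylinder_def prod_emb_def PiE_iff space_PiM)

lemma cylinder_sets: "cylinder J b \<in> sets coin_tosses"
  unfolding cylinder_def coin_tosses_def by (rule sets_PiM_I) auto

lemma emeasure_cylinder: "emeasure coin_tosses (cylinder J b) = ennreal ((1/2)^J)"
proof -
  have "emeasure coin_tosses (cylinder J b) = (\<Prod>j<J. emeasure fair_coin {b j})"
    unfolding coin_tosses_def cylinder_def by (rule emeasure_PiM_emb) (auto simp: prob_space_measure_pmf)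
  also have "\<dots> = (\<Prod>j<J. ennreal (1/2))"
    by (intro prod.cong refl) (auto simp: emeasure_pmf_single pmf_bernoulli_False)
  also have "\<dots> = ennreal ((1/2)^J)" by (simp only: prod_constant card_lessThan ennreal_power)
  finally show ?thesis .
qed

text \<open>Every cylinder has positive measure, so a set of full measure meets all of them.\<close>

lemma full_measure_meets_cylinder:
  assumes A: "A \<in> sets coin_tosses" "emeasure coin_tosses A = 1"
  shows "\<exists>a\<in>A. a \<in> cylinder J b"
proof (rule ccontr)
  assume "\<not> ?thesis"
  then have "A \<inter> cylinder J b = {}" by auto
  then have "emeasure coin_tosses A + emeasure coin_tosses (cylinder J b) = emeasure coin_tosses (A \<union> cylinder J b)"
    by (rule plus_emeasure[OF A(1) cylinder_sets])
  also have "\<dots> \<le> emeasure coin_tosses (space coin_tosses)" by (rule emeasure_space)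
  also have "\<dots> = 1" using prob_space_coin_tosses by (simp add: prob_space.emeasure_space_1)
  finally have "ennreal (1 + (1/2)^J) \<le> ennreal 1" using A(2) by (simp add: emeasure_cylinder ennreal_plus)
  then have "(1/2::real)^J \<le> 0" by (subst (asm) ennreal_le_iff) auto
  then show False using zero_less_power[of "1/2::real" J] by linarith
qed

text \<open>The eigenvalue map is measurable, being a pointwise limit of finite products of coordinates.\<close>

lemma partial_eigval_measurable: "partial_eigval lam J \<in> borel_measurable coin_tosses"
proof -
  have "(\<lambda>a. if a j then lam j else 1) \<in> borel_measurable coin_tosses" for j
  proof -
    have "(\<lambda>a::nat \<Rightarrow> bool. a j) \<in> measurable coin_tosses fair_coin"
      unfolding coin_tosses_def by (rule measurable_component_singleton) simp
    then show ?thesis by (rule measurable_compose) simp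
  qed
  then show ?thesis unfolding partial_eigval_def by (intro borel_measurable_prod) auto
qed

lemma eigval_measurable:
  "unimodular lam \<Longrightarrow> summable (\<lambda>j. cmod (lam j - 1)) \<Longrightarrow> eigval lam \<in> borel_measurable coin_tosses"
  by (rule borel_measurable_LIMSEQ_metric[OF partial_eigval_measurable partial_eigval_tendsto])

text \<open>An injective eigenvalue map has singleton fibres, which lie in cylinders of arbitrarily
  small measure; hence the spectral measure has no atoms.\<close>

lemma spectral_measure_atomless:
  assumes meas: "eigval lam \<in> borel_measurable coin_tosses" and inj: "inj (eigval lam)"
  shows "emeasure (spectral_measure lam) {z} = 0"
proof -
  let ?F = "eigval lam -` {z} \<inter> space coin_tosses"
  have eq: "emeasure (spectral_measure lam) {z} = emeasure coin_tosses ?F"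
    unfolding spectral_measure_def by (rule emeasure_distr[OF meas]) simp
  show ?thesis
  proof (cases "?F = {}")
    case False
    then obtain a0 where a0: "eigval lam a0 = z" by auto
    have le: "emeasure coin_tosses ?F \<le> ennreal ((1/2)^J)" for J
    proof -
      have "?F \<subseteq> cylinder J a0" using inj a0 by (auto simp: cylinder_iff inj_eq)
      then show ?thesis using emeasure_mono[OF _ cylinder_sets] emeasure_cylinder by metis
    qed
    have "emeasure coin_tosses ?F \<le> 0"
    proof (rule ennreal_le_epsilon)
      fix e :: real assume "0 < e"
      then obtain J where J: "(1/2::real)^J < e" using real_arch_pow_inv[of e "1/2"] by auto
      have "emeasure coin_tosses ?F \<le> ennreal ((1/2)^J)" by (rule le)
      also have "\<dots> \<le> ennreal e" by (rule ennreal_leI) (use J in simp)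
      finally show "emeasure coin_tosses ?F \<le> 0 + ennreal e" by simp
    qed
    then show ?thesis by (simp add: eq)
  qed (simp add: eq)
qed

lemma spectral_measure_prob:
  assumes meas: "eigval lam \<in> borel_measurable coin_tosses"
    and unit: "\<And>a. cmod (eigval lam a) = 1"
  shows "sets (spectral_measure lam) = sets borel" "prob_space (spectral_measure lam)"
    "emeasure (spectral_measure lam) (sphere 0 1) = 1"
proof -
  show "sets (spectral_measure lam) = sets borel" by (simp add: spectral_measure_def)
  show "prob_space (spectral_measure lam)"
    unfolding spectral_measure_def by (rule prob_space.prob_space_distr[OF prob_space_coin_tosses meas])
  have "emeasure (spectral_measure lam) (sphere 0 1) = emeasure coin_tosses (eigval lam -` sphere 0 1 \<inter> space coin_tosses)"
    unfolding spectral_measure_def by (rule emeasure_distr[OF meas]) simp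
  also have "eigval lam -` sphere 0 1 \<inter> space coin_tosses = space coin_tosses" using unit by auto
  also have "emeasure coin_tosses (space coin_tosses) = 1"
    using prob_space_coin_tosses by (simp add: prob_space.emeasure_space_1)
  finally show "emeasure (spectral_measure lam) (sphere 0 1) = 1" .
qed

lemma lincomb_ell2: "finite F \<Longrightarrow> F \<subseteq> ell2 \<Longrightarrow> (\<lambda>i. \<Sum>v\<in>F. c v * v i) \<in> ell2"
proof (induction F rule: finite_induct)
  case (insert w F)
  then show ?case using ell2_add[of "\<lambda>i. c w * w i" "\<lambda>i. \<Sum>v\<in>F. c v * v i"] ell2_scale[of w] by simp
qed (simp add: ell2_zero)

lemma cspan_subset_ell2: "S \<subseteq> ell2 \<Longrightarrow> y \<in> cspan_ell2 S \<Longrightarrow> y \<in> ell2"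
  unfolding cspan_ell2_def using lincomb_ell2 by blast

lemma cspan_mem: "v \<in> S \<Longrightarrow> v \<in> cspan_ell2 S"
  unfolding cspan_ell2_def by (rule CollectI, rule exI[of _ "{v}"], rule exI[of _ "\<lambda>_. 1"]) simp

lemma cspan_add:
  assumes "y1 \<in> cspan_ell2 S" "y2 \<in> cspan_ell2 S"
  shows "(\<lambda>i. y1 i + y2 i) \<in> cspan_ell2 S"
proof -
  obtain F1 c1 where 1: "y1 = (\<lambda>i. \<Sum>v\<in>F1. c1 v * v i)" "finite F1" "F1 \<subseteq> S"
    using assms(1) unfolding cspan_ell2_def by blast
  obtain F2 c2 where 2: "y2 = (\<lambda>i. \<Sum>v\<in>F2. c2 v * v i)" "finite F2" "F2 \<subseteq> S"
    using assms(2) unfolding cspan_ell2_def by blast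
  define c where "c v = (if v \<in> F1 then c1 v else 0) + (if v \<in> F2 then c2 v else 0)" for v
  have "y1 i + y2 i = (\<Sum>v\<in>F1 \<union> F2. c v * v i)" for i
  proof -
    have "(\<Sum>v\<in>F1 \<union> F2. c v * v i) = (\<Sum>v\<in>F1 \<union> F2. (if v \<in> F1 then c1 v * v i else 0))
        + (\<Sum>v\<in>F1 \<union> F2. (if v \<in> F2 then c2 v * v i else 0))"
    proof -
      have t: "c v * v i = (if v \<in> F1 then c1 v * v i else 0) + (if v \<in> F2 then c2 v * v i else 0)" for v
        by (simp add: c_def distrib_right)
      show ?thesis by (simp only: t sum.distrib)
    qed
    also have "\<dots> = (\<Sum>v\<in>F1. c1 v * v i) + (\<Sum>v\<in>F2. c2 v * v i)"
      using 1(2) 2(2) by (simp add: sum.inter_restrict[symmetric] Int_absorb1 Int_absorb2)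
    finally show ?thesis by (simp add: 1 2)
  qed
  then show ?thesis unfolding cspan_ell2_def using 1 2 by blast
qed

lemma cspan_scale:
  assumes "y \<in> cspan_ell2 S" shows "(\<lambda>i. a * y i) \<in> cspan_ell2 S"
proof -
  obtain F c where 1: "y = (\<lambda>i. \<Sum>v\<in>F. c v * v i)" "finite F" "F \<subseteq> S"
    using assms(1) unfolding cspan_ell2_def by blast
  have "(\<lambda>i. a * y i) = (\<lambda>i. \<Sum>v\<in>F. (a * c v) * v i)"
    by (simp add: 1 sum_distrib_left mult.assoc)
  then show ?thesis unfolding cspan_ell2_def using 1(2,3)
    by (intro CollectI exI[of _ F] exI[of _ "\<lambda>v. a * c v"]) simp
qed

lemma closed_span_subset_ell2: "x \<in> closed_span_ell2 S \<Longrightarrow> x \<in> ell2"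
  by (simp add: closed_span_ell2_def)

lemma cspan_subset_closed_span: "S \<subseteq> ell2 \<Longrightarrow> y \<in> cspan_ell2 S \<Longrightarrow> y \<in> closed_span_ell2 S"
  unfolding closed_span_ell2_def using cspan_subset_ell2[of S y]
  by (auto simp: ell2_norm_zero intro!: bexI[of _ y])

lemma closed_span_approx_cspan:
  assumes "x \<in> closed_span_ell2 S" "e > 0"
  obtains z where "z \<in> cspan_ell2 S" "ell2_norm (\<lambda>i. x i - z i) < e"
  using assms unfolding closed_span_ell2_def by blast

lemma closed_span_approx:
  assumes S: "S \<subseteq> ell2" and x: "x \<in> ell2"
    and ap: "\<And>e. e > 0 \<Longrightarrow> \<exists>y\<in>closed_span_ell2 S. ell2_norm (\<lambda>i. x i - y i) < e"
  shows "x \<in> closed_span_ell2 S"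
  unfolding closed_span_ell2_def
proof (intro CollectI conjI x allI impI)
  fix e :: real assume e: "e > 0"
  obtain y where y: "y \<in> closed_span_ell2 S" "ell2_norm (\<lambda>i. x i - y i) < e/2" using ap[of "e/2"] e by auto
  obtain z where z: "z \<in> cspan_ell2 S" "ell2_norm (\<lambda>i. y i - z i) < e/2"
    using closed_span_approx_cspan[OF y(1), of "e/2"] e by auto
  have "ell2_norm (\<lambda>i. x i - z i) \<le> ell2_norm (\<lambda>i. x i - y i) + ell2_norm (\<lambda>i. y i - z i)"
    by (rule ell2_dist_triangle[OF x closed_span_subset_ell2[OF y(1)] cspan_subset_ell2[OF S z(1)]])
  with y z show "\<exists>z\<in>cspan_ell2 S. ell2_norm (\<lambda>i. x i - z i) < e" by (intro bexI[OF _ z(1)]) simp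
qed

lemma closed_span_add:
  assumes S: "S \<subseteq> ell2" and x: "x \<in> closed_span_ell2 S" and y: "y \<in> closed_span_ell2 S"
  shows "(\<lambda>i. x i + y i) \<in> closed_span_ell2 S"
  unfolding closed_span_ell2_def
proof (intro CollectI conjI allI impI)
  show "(\<lambda>i. x i + y i) \<in> ell2"
    using ell2_add[OF closed_span_subset_ell2[OF x] closed_span_subset_ell2[OF y]] by simp
  fix e :: real assume e: "e > 0"
  obtain z1 where z1: "z1 \<in> cspan_ell2 S" "ell2_norm (\<lambda>i. x i - z1 i) < e/2"
    using closed_span_approx_cspan[OF x, of "e/2"] e by auto
  obtain z2 where z2: "z2 \<in> cspan_ell2 S" "ell2_norm (\<lambda>i. y i - z2 i) < e/2"
    using closed_span_approx_cspan[OF y, of "e/2"] e by auto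
  have "ell2_norm (\<lambda>i. x i + y i - (z1 i + z2 i)) \<le> ell2_norm (\<lambda>i. x i - z1 i) + ell2_norm (\<lambda>i. y i - z2 i)"
    using ell2_add[OF ell2_diff[OF closed_span_subset_ell2[OF x] cspan_subset_ell2[OF S z1(1)]]
        ell2_diff[OF closed_span_subset_ell2[OF y] cspan_subset_ell2[OF S z2(1)]]]
    by (simp add: algebra_simps)
  then show "\<exists>z\<in>cspan_ell2 S. ell2_norm (\<lambda>i. x i + y i - z i) < e"
    using z1 z2 by (intro bexI[OF _ cspan_add[OF z1(1) z2(1)]]) simp
qed

lemma closed_span_scale:
  assumes S: "S \<subseteq> ell2" and x: "x \<in> closed_span_ell2 S"
  shows "(\<lambda>i. a * x i) \<in> closed_span_ell2 S"
  unfolding closed_span_ell2_def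
proof (intro CollectI conjI allI impI)
  show "(\<lambda>i. a * x i) \<in> ell2" using ell2_scale[OF closed_span_subset_ell2[OF x]] by simp
  fix e :: real assume e: "e > 0"
  have ca: "cmod a + 1 > 0" by (simp add: add_nonneg_pos)
  obtain z where z: "z \<in> cspan_ell2 S" "ell2_norm (\<lambda>i. x i - z i) < e / (cmod a + 1)"
    using closed_span_approx_cspan[OF x, of "e / (cmod a + 1)"] e ca by auto
  have d: "(\<lambda>i. x i - z i) \<in> ell2"
    by (rule ell2_diff[OF closed_span_subset_ell2[OF x] cspan_subset_ell2[OF S z(1)]])
  have "(\<lambda>i. a * x i - a * z i) = (\<lambda>i. a * (x i - z i))" by (simp add: algebra_simps)
  then have "ell2_norm (\<lambda>i. a * x i - a * z i) = cmod a * ell2_norm (\<lambda>i. x i - z i)"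
    using ell2_scale[OF d, of a] by simp
  also have "\<dots> \<le> (cmod a + 1) * ell2_norm (\<lambda>i. x i - z i)"
    by (intro mult_right_mono ell2_norm_nonneg d) simp
  also have "\<dots> < (cmod a + 1) * (e / (cmod a + 1))"
    by (intro mult_strict_left_mono z(2) ca)
  also have "\<dots> = e" using ca by simp
  finally show "\<exists>z\<in>cspan_ell2 S. ell2_norm (\<lambda>i. a * x i - z i) < e"
    by (intro bexI[OF _ cspan_scale[OF z(1)]])
qed

lemma closed_span_sum:
  assumes S: "S \<subseteq> ell2" and "finite K" and "\<And>k. k \<in> K \<Longrightarrow> f k \<in> closed_span_ell2 S"
  shows "(\<lambda>i. \<Sum>k\<in>K. a k * f k i) \<in> closed_span_ell2 S"
  using assms(2,3)
proof (induction K rule: finite_induct)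
  case empty
  have "(\<lambda>i. 0) \<in> cspan_ell2 S"
    unfolding cspan_ell2_def by (rule CollectI, rule exI[of _ "{}"], rule exI[of _ "\<lambda>_. 0"]) simp
  then show ?case using cspan_subset_closed_span[OF S] by simp
next
  case (insert k K)
  have "(\<lambda>i. a k * f k i) \<in> closed_span_ell2 S" by (rule closed_span_scale[OF S insert.prems]) simp
  from closed_span_add[OF S this insert.IH] insert show ?case by simp
qed

text \<open>A subset of \<open>\<ell>\<^sub>2\<close> whose closed span contains every unit vector spans everything,
  because truncations converge.\<close>

lemma closed_span_eq_ell2I:
  assumes S: "S \<subseteq> ell2" and unit: "\<And>k. (\<lambda>m. if m = k then 1 else 0) \<in> closed_span_ell2 S"
  shows "closed_span_ell2 S = ell2"
proof -
  have trunc: "truncate N x \<in> closed_span_ell2 S" for N x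
  proof -
    have "truncate N x = (\<lambda>m. \<Sum>k\<in>{..<N}. x k * (if m = k then 1 else 0))"
    proof
      fix m
      have "x k * (if m = k then 1 else 0) = (if k = m then x k else 0)" for k by auto
      then show "truncate N x m = (\<Sum>k\<in>{..<N}. x k * (if m = k then 1 else 0))"
        by (simp add: truncate_def)
    qed
    then show ?thesis using closed_span_sum[OF S, of "{..<N}" "\<lambda>k m. if m = k then 1 else 0" x] unit by simp
  qed
  have "x \<in> closed_span_ell2 S" if x: "x \<in> ell2" for x
  proof (rule closed_span_approx[OF S x])
    fix e :: real assume "e > 0"
    then obtain N where "\<forall>n\<ge>N. ell2_norm (\<lambda>m. x m - truncate n x m) < e"
      using eventually_less_of_tendsto_0[OF truncate_tendsto[OF x]] by blast
    then show "\<exists>y\<in>closed_span_ell2 S. ell2_norm (\<lambda>i. x i - y i) < e" using trunc by blast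
  qed
  then show ?thesis using closed_span_subset_ell2 by blast
qed

lemma closed_span_of_zero_vectors:
  assumes "x \<in> closed_span_ell2 S" "\<And>v i. v \<in> S \<Longrightarrow> v i = 0"
  shows "x = (\<lambda>i. 0)"
proof -
  have zero: "y = (\<lambda>i. 0)" if y: "y \<in> cspan_ell2 S" for y
  proof -
    obtain F c where "y = (\<lambda>i. \<Sum>v\<in>F. c v * v i)" "F \<subseteq> S"
      using y unfolding cspan_ell2_def by blast
    then show ?thesis using assms(2) by (auto intro!: ext sum.neutral)
  qed
  have x: "x \<in> ell2" by (rule closed_span_subset_ell2[OF assms(1)])
  have "ell2_norm x < e" if e: "e > 0" for e
  proof -
    obtain y where y: "y \<in> cspan_ell2 S" "ell2_norm (\<lambda>i. x i - y i) < e"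
      using closed_span_approx_cspan[OF assms(1) e] by blast
    then show ?thesis using zero[OF y(1)] by simp
  qed
  then have "ell2_norm x \<le> 0" using not_le by blast
  then have "ell2_norm x = 0" using ell2_norm_nonneg[OF x] by linarith
  then show ?thesis by (rule ell2_norm_eq_0[OF x])
qed

section \<open>Perfect spanning\<close>

text \<open>Every finitely supported eigenvector is a limit of eigenvectors \<open>eigvec a\<close> with \<open>a\<close> in a
  given set \<open>A\<close> of full measure: pick \<open>a \<in> A\<close> agreeing with the support on a long prefix.\<close>

lemma finite_eigvec_in_closed_span:
  assumes S: "S \<subseteq> ell2" and A: "A \<in> sets coin_tosses" "emeasure coin_tosses A = 1"
    and AS: "\<And>a. a \<in> A \<Longrightarrow> eigvec a \<in> S" and R: "finite R"
  shows "eigvec (\<lambda>j. j \<in> R) \<in> closed_span_ell2 S"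
proof (rule closed_span_approx[OF S eigvec_ell2])
  fix e :: real assume e: "e > 0"
  obtain N where N: "R \<subseteq> {..<N}" using R by (auto simp: finite_nat_set_iff_bounded)
  obtain J0 where J0: "\<forall>J\<ge>J0. sqrt (\<Sum>m. if m < J then 0 else eigvec_bound m) < e"
    using eventually_less_of_tendsto_0[OF eigvec_prefix_bound_tendsto e] by blast
  define J where "J = max N J0"
  obtain a where a: "a \<in> A" "a \<in> cylinder J (\<lambda>j. j \<in> R)"
    using full_measure_meets_cylinder[OF A] by blast
  have "prefix J a = (\<lambda>j. j \<in> R)"
  proof
    fix j show "prefix J a j = (j \<in> R)"
      using a(2) N by (cases "j < J") (auto simp: prefix_def cylinder_iff J_def)
  qed
  then have "ell2_norm (\<lambda>i. eigvec (\<lambda>j. j \<in> R) i - eigvec a i)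
               = ell2_norm (\<lambda>m. eigvec a m - eigvec (prefix J a) m)"
    by (simp add: ell2_dist_commute)
  also have "\<dots> \<le> sqrt (\<Sum>m. if m < J then 0 else eigvec_bound m)" by (rule eigvec_prefix_dist)
  also have "\<dots> < e" using J0 J_def by simp
  finally show "\<exists>y\<in>closed_span_ell2 S. ell2_norm (\<lambda>i. eigvec (\<lambda>j. j \<in> R) i - y i) < e"
    using cspan_subset_closed_span[OF S cspan_mem[OF AS[OF a(1)]]] by blast
qed

text \<open>Conversely every unit vector is a finite combination of finitely supported eigenvectors:
  the factors \<open>[[1,1],[0,2\<^sup>-\<^sup>j]]\<close> are inverted by \<open>[[1,-2\<^sup>j],[0,2\<^sup>j]]\<close>.\<close>

lemma unit_vector_eigvec_expansion:
  "(\<lambda>m. if m = k then 1 else 0) =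
     (\<lambda>m. \<Sum>r\<in>{..k}. tensor_entry (\<lambda>j. - (2^j)) (\<lambda>j. 2^j) r k * eigvec (\<lambda>j. j \<in> bits r) m)"
proof
  fix m
  let ?G = "\<lambda>j. - (2^j) :: complex" and ?H = "\<lambda>j. 2^j :: complex"
  have "(\<Sum>r\<in>{..k}. tensor_entry ?G ?H r k * eigvec (\<lambda>j. j \<in> bits r) m)
          = (\<Sum>r. tensor_entry (\<lambda>_. 1) eig_weight m r * tensor_entry ?G ?H r k)"
    using eigvec_finite_entry[of "\<lambda>j. j \<in> bits _" m]
    by (subst suminf_finite[of "{..k}"]) (auto simp: mult.commute dest: tensor_entry_nonzero_le)
  also have "\<dots> = tensor_entry (\<lambda>j. 1 * ?H j + ?G j) (\<lambda>j. eig_weight j * ?H j) m k"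
    by (rule tensor_entry_mult)
  also have "(\<lambda>j. 1 * ?H j + ?G j) = (\<lambda>_. 0)" by simp
  also have "(\<lambda>j. eig_weight j * ?H j) = (\<lambda>_. 1)" using two_pow_eig_weight by (simp add: mult.commute)
  finally show "(if m = k then 1 else 0)
      = (\<Sum>r\<in>{..k}. tensor_entry ?G ?H r k * eigvec (\<lambda>j. j \<in> bits r) m)"
    by (simp add: tensor_entry_identity)
qed

text \<open>The model operator has perfectly spanning eigenvectors with respect to the spectral
  measure: a set \<open>B\<close> of full measure pulls back to a full set of choice sequences.\<close>

lemma model_op_spanning:
  assumes adm: "admissible (\<lambda>j. 2^j * (lam j - 1)) lam"
    and B: "B \<in> sets borel" "emeasure (spectral_measure lam) B = 1"
  shows "closed_span_ell2 (\<Union>l\<in>B. eigenspace_ell2 (model_op lam) l) = ell2"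
proof -
  define S where "S = (\<Union>l\<in>B. eigenspace_ell2 (model_op lam) l)"
  have S: "S \<subseteq> ell2" by (auto simp: S_def eigenspace_ell2_def)
  have meas: "eigval lam \<in> borel_measurable coin_tosses"
    using adm summable_of_admissible_model[OF adm] by (simp add: admissible_def eigval_measurable)
  define A where "A = eigval lam -` B \<inter> space coin_tosses"
  have A: "A \<in> sets coin_tosses" unfolding A_def by (rule measurable_sets[OF meas B(1)])
  have A1: "emeasure coin_tosses A = 1"
    using B(2) by (simp add: spectral_measure_def emeasure_distr[OF meas B(1)] A_def)
  have AS: "eigvec a \<in> S" if "a \<in> A" for a
    using that model_op_eigvec[OF adm]
    by (auto simp: S_def A_def eigenspace_ell2_def eigvec_ell2)
  have "(\<lambda>m. if m = k then 1 else 0) \<in> closed_span_ell2 S" for k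
    unfolding unit_vector_eigvec_expansion
    by (rule closed_span_sum[OF S]) (auto intro: finite_eigvec_in_closed_span[OF S A A1 AS])
  then show ?thesis unfolding S_def[symmetric] by (rule closed_span_eq_ell2I[OF S])
qed

lemma model_op_perfectly_spanning:
  assumes adm: "admissible (\<lambda>j. 2^j * (lam j - 1)) lam"
    and ne: "\<And>j. lam j \<noteq> 1" and dd: "\<And>j. cmod (lam (Suc j) - 1) \<le> cmod (lam j - 1) / 4"
  shows "perfectly_spanning_unimodular (model_op lam)"
proof -
  have u: "unimodular lam" using adm by (simp add: admissible_def)
  note s = summable_of_admissible_model[OF adm]
  have meas: "eigval lam \<in> borel_measurable coin_tosses" by (rule eigval_measurable[OF u s])
  note prob = spectral_measure_prob[OF meas cmod_eigval[OF u s]]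
  show ?thesis
    unfolding perfectly_spanning_unimodular_def
  proof (intro exI[of _ "spectral_measure lam"] conjI allI impI prob)
    show "emeasure (spectral_measure lam) {z} = 0" for z
      by (rule spectral_measure_atomless[OF meas eigval_inj[OF u s dd ne]])
    show "closed_span_ell2 (\<Union>l\<in>B. eigenspace_ell2 (model_op lam) l) = ell2"
      if "B \<in> sets borel" "emeasure (spectral_measure lam) B = 1" for B
      using model_op_spanning[OF adm that] .
  qed
qed

lemma countable_null_set:
  fixes \<sigma> :: "'a::t1_space measure"
  assumes sets: "sets \<sigma> = sets borel" and atom: "\<And>z. emeasure \<sigma> {z} = 0" and C: "countable C"
  shows "C \<in> null_sets \<sigma>"
proof -
  have single: "{z} \<in> sets \<sigma>" for z by (simp add: sets)
  have "emeasure \<sigma> C = 0" using emeasure_countable_singleton[OF single C] atom by simp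
  then show ?thesis using sets.countable[OF single C] by (simp add: null_sets_def)
qed

lemma closed_span_of_non_eigenvalues:
  assumes "B \<inter> point_spectrum_ell2 T = {}"
  shows "closed_span_ell2 (\<Union>l\<in>B. eigenspace_ell2 T l) \<noteq> ell2"
proof
  assume all: "closed_span_ell2 (\<Union>l\<in>B. eigenspace_ell2 T l) = ell2"
  have zero: "v i = 0" if v: "v \<in> (\<Union>l\<in>B. eigenspace_ell2 T l)" for v i
  proof (rule ccontr)
    assume "v i \<noteq> 0"
    then have "v \<noteq> (\<lambda>i. 0)" by auto
    moreover obtain l where "l \<in> B" "v \<in> eigenspace_ell2 T l" using v by blast
    ultimately show False using assms by (auto simp: point_spectrum_ell2_def)
  qed
  define e0 :: "nat \<Rightarrow> complex" where "e0 = (\<lambda>i. if i = 0 then 1 else 0)"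
  have "e0 \<in> ell2" unfolding e0_def by (rule ell2_finite_support[of 1]) simp
  then have "e0 \<in> closed_span_ell2 (\<Union>l\<in>B. eigenspace_ell2 T l)" by (simp add: all)
  then have "e0 = (\<lambda>i. 0)"
  proof (rule closed_span_of_zero_vectors)
    show "v i = 0" if "v \<in> (\<Union>l\<in>B. eigenspace_ell2 T l)" for v i by (rule zero[OF that])
  qed
  then have "e0 0 = 0" by simp
  then show False by (simp add: e0_def)
qed

text \<open>Otherwise its complement in the
  circle would have full measure and consist of non-eigenvalues.\<close>

lemma perfectly_spanning_uncountable_point_spectrum:
  assumes "perfectly_spanning_unimodular T"
  shows "uncountable (point_spectrum_ell2 T \<inter> sphere 0 1)"
proof
  define C where "C = point_spectrum_ell2 T \<inter> sphere 0 1"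
  assume "countable (point_spectrum_ell2 T \<inter> sphere 0 1)"
  then have C: "countable C" by (simp add: C_def)
  obtain \<sigma> :: "complex measure" where sets: "sets \<sigma> = sets borel" and sph: "emeasure \<sigma> (sphere 0 1) = 1"
    and atom: "\<And>z. emeasure \<sigma> {z} = 0"
    and span: "\<And>B. B \<in> sets borel \<Longrightarrow> B \<subseteq> sphere 0 1 \<Longrightarrow> emeasure \<sigma> B = 1 \<Longrightarrow>
                 closed_span_ell2 (\<Union>l\<in>B. eigenspace_ell2 T l) = ell2"
    using assms unfolding perfectly_spanning_unimodular_def by (elim exE conjE) (simp only: all_simps)
  have null: "C \<in> null_sets \<sigma>" by (rule countable_null_set[OF sets atom C])
  define B where "B = sphere (0::complex) 1 - C"
  have "C \<in> sets borel" using null sets by (simp add: null_sets_def)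
  then have B: "B \<in> sets borel" "B \<subseteq> sphere 0 1"
    unfolding B_def by (auto intro: sets.Diff borel_closed)
  have "emeasure \<sigma> B = 1"
    unfolding B_def using emeasure_Diff_null_set[OF null] sph sets by simp
  moreover have "B \<inter> point_spectrum_ell2 T = {}" by (auto simp: B_def C_def)
  ultimately show False using span[OF B] closed_span_of_non_eigenvalues by blast
qed
section \<open>Power bounds for the model operator\<close>

lemma tensor_bound_le:
  assumes "\<And>j. cmod (g j) \<le> c j" "summable c"
  shows "tensor_bound g \<le> exp (\<Sum>j. c j)"
proof -
  have "summable (\<lambda>j. cmod (g j))" by (rule summable_comparison_test'[OF assms(2)]) (simp add: assms(1))
  then show ?thesis unfolding tensor_bound_def by (simp add: suminf_le assms)
qed

text \<open>By the power formula, \<open>\<parallel>T\<^sup>m\<parallel>\<close> is controlled by the distances of the \<open>\<lambda>\<^sub>j\<^sup>m\<close> to 1.\<close>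

lemma model_op_power_norm:
  assumes "admissible (\<lambda>j. 2^j * (lam j - 1)) lam"
  shows "op_norm_ell2 (model_op lam ^^ m) \<le> tensor_bound (\<lambda>j. 2^j * (lam j ^ m - 1))"
proof (rule op_norm_ell2_le)
  note adm = admissible_power[OF assms, of m]
  show "ell2_norm ((model_op lam ^^ m) x) \<le> tensor_bound (\<lambda>j. 2^j * (lam j ^ m - 1)) * ell2_norm x"
    if "x \<in> ell2" for x
    using tensor_op_bounded[OF adm that] tensor_op_power[OF assms that] by (simp add: model_op_def)
  show "0 \<le> tensor_bound (\<lambda>j. 2^j * (lam j ^ m - 1))" using tensor_bound_ge_1[OF adm] by simp
qed

text \<open>With distances \<open>|\<lambda>\<^sub>j\<^sup>m - 1| \<le> s 2\<^sup>-\<^sup>2\<^sup>j\<^sup>-\<^sup>1\<close>, the weighted entries \<open>2\<^sup>j(\<lambda>\<^sub>j\<^sup>m - 1)\<close> are bounded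
  by \<open>s 2\<^sup>-\<^sup>j\<^sup>-\<^sup>1\<close>, a series with sum \<open>s\<close>.\<close>

lemma weighted_distance_le:
  assumes "cmod z \<le> s * (1/2)^(2*j+1)"
  shows "cmod (2^j * z) \<le> s * (1/2)^Suc j"
proof -
  have half: "(1/2::real)^(2*j+1) = (1/2)^j * (1/2)^Suc j" by (simp add: power_add[symmetric] mult_2)
  have cancel: "(2::real)^j * (1/2)^j = 1" by (simp add: power_mult_distrib[symmetric])
  have "cmod (2^j * z) = 2^j * cmod z" by (simp add: norm_mult norm_power)
  also have "\<dots> \<le> 2^j * (s * (1/2)^(2*j+1))" by (intro mult_left_mono assms) simp
  also have "\<dots> = s * ((2^j * (1/2)^j) * (1/2)^Suc j)" unfolding half by (simp only: mult_ac)
  finally show ?thesis by (simp only: cancel mult_1)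
qed

lemma half_series_sums: "(\<lambda>j. s * (1/2::real)^Suc j) sums s"
  using sums_mult[OF power_half_series, of s] by simp

lemma admissible_model_of_close:
  assumes "unimodular lam" "\<And>j. cmod (lam j - 1) \<le> s * (1/2)^(2*j+1)"
  shows "admissible (\<lambda>j. 2^j * (lam j - 1)) lam"
proof -
  have "summable (\<lambda>j. cmod (2^j * (lam j - 1)))"
  proof (rule summable_comparison_test'[OF sums_summable[OF half_series_sums]])
    show "norm (cmod (2^j * (lam j - 1))) \<le> s * (1/2)^Suc j" for j
      using weighted_distance_le[OF assms(2)] by simp
  qed
  then show ?thesis using assms(1) by (simp add: admissible_def)
qed

lemma model_op_power_norm_le_exp:
  assumes "admissible (\<lambda>j. 2^j * (lam j - 1)) lam"
    and "\<And>j. cmod (lam j ^ m - 1) \<le> s * (1/2)^(2*j+1)"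
  shows "op_norm_ell2 (model_op lam ^^ m) \<le> exp s"
proof -
  have "op_norm_ell2 (model_op lam ^^ m) \<le> tensor_bound (\<lambda>j. 2^j * (lam j ^ m - 1))"
    by (rule model_op_power_norm[OF assms(1)])
  also have "\<dots> \<le> exp (\<Sum>j. s * (1/2)^Suc j)"
    by (rule tensor_bound_le[OF weighted_distance_le[OF assms(2)] sums_summable[OF half_series_sums]])
  also have "\<dots> = exp s" using sums_unique[OF half_series_sums] by simp
  finally show ?thesis .
qed

text \<open>The hypothesis on \<open>(n\<^sub>k)\<close> lets us choose \<open>\<lambda>\<^sub>j\<close> one after the other, each with all
  powers \<open>\<lambda>\<^sub>j^(n\<^sub>k)\<close> within a prescribed distance of 1; since \<open>n\<^sub>0 = 1\<close> this also makes
  \<open>|\<lambda>\<^sub>j\<^sub>+\<^sub>1 - 1| \<le> |\<lambda>\<^sub>j - 1|/4\<close> possible.\<close>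

lemma exists_eigenvalue_sequence:
  fixes n :: "nat \<Rightarrow> nat" and eps :: "nat \<Rightarrow> real"
  assumes n0: "n 0 = 1"
    and approx: "\<forall>\<epsilon>>0. \<exists>l::complex. cmod l = 1 \<and> l \<noteq> 1 \<and> (\<forall>k. cmod (l ^ n k - 1) \<le> \<epsilon>)"
    and eps: "\<And>j. eps j > 0"
  obtains lam where "unimodular lam" "\<And>j. lam j \<noteq> 1"
    "\<And>j. cmod (lam (Suc j) - 1) \<le> cmod (lam j - 1) / 4"
    "\<And>j k. cmod (lam j ^ n k - 1) \<le> eps j"
proof -
  define good where "good e l \<longleftrightarrow> cmod l = 1 \<and> l \<noteq> 1 \<and> (\<forall>k. cmod (l ^ n k - 1) \<le> e)" for e l
  have ex: "\<exists>l. good e l" if "e > 0" for e using approx that by (simp add: good_def)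
  have "\<exists>f. \<forall>j. good (eps j) (f j) \<and> cmod (f (Suc j) - 1) \<le> cmod (f j - 1) / 4"
  proof (rule dependent_nat_choice)
    show "\<exists>x. good (eps 0) x" by (rule ex[OF eps])
  next
    fix x j assume x: "good (eps j) x"
    then have pos: "min (eps (Suc j)) (cmod (x - 1) / 4) > 0" using eps by (simp add: good_def)
    obtain y where y: "good (min (eps (Suc j)) (cmod (x - 1) / 4)) y" using ex[OF pos] by blast
    then have "cmod (y ^ n 0 - 1) \<le> cmod (x - 1) / 4" by (simp add: good_def)
    moreover have "good (eps (Suc j)) y" using y by (auto simp: good_def intro: order_trans)
    ultimately show "\<exists>y. good (eps (Suc j)) y \<and> cmod (y - 1) \<le> cmod (x - 1) / 4"
      using n0 by auto
  qed
  then obtain f where "\<And>j. good (eps j) (f j)" "\<And>j. cmod (f (Suc j) - 1) \<le> cmod (f j - 1) / 4"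
    by blast
  then show thesis by (intro that[of f]) (auto simp: good_def unimodular_def)
qed

theorem theorem2p1:
  fixes n :: "nat \<Rightarrow> nat"
  assumes "strict_mono n"
    and "n 0 = 1"
    and "\<forall>k. n k > 0"
    and "\<forall>\<epsilon>>0. \<exists>l::complex. cmod l = 1 \<and> l \<noteq> 1 \<and>
                  (\<forall>k. cmod (l ^ n k - 1) \<le> \<epsilon>)"
  shows "\<forall>\<delta>>(0::real). \<exists>T. bounded_op_ell2 T \<and> perfectly_spanning_unimodular T \<and>
           (\<forall>k. op_norm_ell2 (T ^^ n k) \<le> 1 + \<delta>) \<and>
           uncountable (point_spectrum_ell2 T \<inter> sphere 0 1)"
proof (intro allI impI)
  fix \<delta> :: real assume "\<delta> > 0"
  define s where "s = ln (1 + \<delta>)"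
  have s: "s > 0" "exp s = 1 + \<delta>" using \<open>\<delta> > 0\<close> by (auto simp: s_def)
  obtain lam where u: "unimodular lam" and ne: "\<And>j. lam j \<noteq> 1"
    and dd: "\<And>j. cmod (lam (Suc j) - 1) \<le> cmod (lam j - 1) / 4"
    and close: "\<And>j k. cmod (lam j ^ n k - 1) \<le> s * (1/2)^(2*j+1)"
    using exists_eigenvalue_sequence[OF assms(2,4), of "\<lambda>j. s * (1/2)^(2*j+1)"] s by auto
  have adm: "admissible (\<lambda>j. 2^j * (lam j - 1)) lam"
    by (rule admissible_model_of_close[OF u]) (use close[of _ 0] assms(2) in simp)
  have "op_norm_ell2 (model_op lam ^^ n k) \<le> 1 + \<delta>" for k
    using model_op_power_norm_le_exp[OF adm close] s(2) by simp
  moreover have "perfectly_spanning_unimodular (model_op lam)"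
    by (rule model_op_perfectly_spanning[OF adm ne dd])
  ultimately show "\<exists>T. bounded_op_ell2 T \<and> perfectly_spanning_unimodular T \<and>
           (\<forall>k. op_norm_ell2 (T ^^ n k) \<le> 1 + \<delta>) \<and> uncountable (point_spectrum_ell2 T \<inter> sphere 0 1)"
    using bounded_op_tensor_op[OF adm] perfectly_spanning_uncountable_point_spectrum
    unfolding model_op_def by blast
qed

end
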